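(* Let $\mathbb{G} = (V,E,L,\Omega,v_I)$ be a parity formula over a finite set $\mathsf{Prop}$ of propositional variables such that (i) $\Omega$ is total, (ii) no vertex is labelled $\epsilon$, and (iii) $E[v]\neq\varnothing$ for every vertex $v$ labelled $\land$ or $\lor$. Let $\mathbb{A}_{\mathbb{G}} = (M_\Omega,\Theta,\mathrm{NBT}_\Omega,m_I)$ be the disjunctive modal automaton defined below. Then $\mathbb{G}\equiv\mathbb{A}_{\mathbb{G}}$.
   Context: Parity formulas. A parity formula over $\mathsf{Prop}$ is $\mathbb{G} = (V,E,L,\Omega,v_I)$ with $V$ finite, $E\subseteq V\times V$, $v_I\in V$, $\Omega$ a priority map into $\omega$ (partial in general, total here), and $L$ labelling each vertex by $\top,\bot,p,\overline{p}$ ($p\in\mathsf{Prop}$), $\land,\lor,\Diamond,\Box$ or $\epsilon$; literal/constant vertices have no successors, $\Diamond,\Box,\epsilon$ vertices have exactly one successor, and every cycle contains a vertex in $\mathrm{dom}(\Omega)$. $E[v]$ is the successor set; $V_\lor := L^{-1}(\lor)$, and similarly $V_\land, V_\Diamond, V_\Box$. Kripke model $\mathbb{S}=(S,R,\mathrm{Val})$, $\mathrm{Val}:S\to\wp\mathsf{Prop}$. Evaluation game $\mathcal{E}(\mathbb{G},\mathbb{S})$ on $V\times S$: at $(v,s)$, $\exists$ wins if $L(v)=\top$, or $L(v)=p\in\mathrm{Val}(s)$, or $L(v)=\overline{p}$ with $p\notin\mathrm{Val}(s)$, and loses at other literal/$\bot$ vertices; at $\lor$ (resp. $\land$) vertices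 $\exists$ (resp. $\forall$) moves to $(u,s)$, $u\in E[v]$; at $\Diamond$ (resp. $\Box$) vertices $\exists$ (resp. $\forall$) moves to $(u,t)$ with $u$ the successor of $v$ and $t\in R[s]$; a stuck player loses; an infinite match is won by $\exists$ iff the largest priority occurring infinitely often is even. Disjunctive modal automata $\mathbb{A}=(A,\Theta,\mathit{Acc},a_I)$: finite $A$, $a_I\in A$, $\mathit{Acc}\subseteq A^\omega$, $\Theta(a,c)$ a finite disjunction of formulas $\nabla B$, $B\subseteq A$, for $a\in A$, $c\in\wp\mathsf{Prop}$. A one-step model $(X,U)$, $U:A\to\wp X$, satisfies $\nabla B$ iff every $b\in B$ has some $x\in X$ with $x\in U(b)$ and every $x\in X$ lies in $U(b)$ for some $b\in B$. Acceptance game $\mathcal{A}(\mathbb{A},\mathbb{S})$: at $(a,s)$, $\exists$ picks $U:A\to\wp R[s]$ with $(R[s],U)\models\Theta(a,\mathrm{Val}(s))$, then $\forall$ picks $(b,t)$ with $t\in U(b)$; stuck player loses; an infinite match is won by $\exists$ iff its stream of states is in $\mathit{Acc}$. $\mathbb{G}\equiv\mathbb{A}$ means: for all pointed Kripke models $(\mathbb{S},s)$, $(v_I,s)$ is winning for $\exists$ in $\mathcal{E}(\mathbb{G},\mathbb{S})$ iff $(a_I,s)$ is winning for $\exists$ in $\mathcal{A}(\mathbb{A},\mathbb{S})$. Macrostates. $M_\Omega := \wp(V\times\mathsf{Ran}(\Omega)\times V)$. $\mathsf{Ran}(m) := \{v \mid (u,k,v)\in m \text{ for some } u,k\}$. Composition: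 $m;m'$ is the set of $(v,k,v'')$ such that there are $(v,k',v')\in m$, $(v',k'',v'')\in m'$ with $k=\max(k',k'')$. $\Delta_U := \{(u,0,u)\mid u\in U\}$, $\Delta_v:=\Delta_{\{v\}}$. A set $U\subseteq V$ is compatible with a color $c\in\wp\mathsf{Prop}$ if for all $u\in U$: $L(u)\neq\bot$, $L(u)=p$ implies $p\in c$, $L(u)=\overline{p}$ implies $p\notin c$. A trace on a stream $(m_i)_{i\in\omega}$ of macrostates is $(v_i,k_i)_{i\in\omega}$ with $(v_i,k_i,v_{i+1})\in m_i$; it is bad if the maximum $k$ occurring as $k_i$ for infinitely many $i$ is odd. $\mathrm{NBT}_\Omega$ is the set of streams of macrostates with no bad trace. Local strategies. A local strategy is $\chi:V_\lor\to V$ with $\chi(v)\in E[v]$. For $v\in V$, $\mathit{SP}_\chi(v)$ is the least set $S$ of finite sequences with: $v\chi(v)\in S$ if $v\in V_\lor$; $vw\in S$ for all $w\in E[v]$ if $v\in V_\land$; if $\pi\in S$ and its last element $u\in V_\lor$ then $\pi\chi(u)\in S$; if $\pi\in S$ and last element $u\in V_\land$ then $\pi w\in S$ for all $w\in E[u]$. For $\pi = vv_1\cdots v_j$ put $\widetilde\Omega(\pi) := \max\{\Omega(v_i)\mid 1\le i\le j\}$. Define $e^-_\chi := \{(v,\widetilde\Omega(\pi),\mathit{last}(\pi)) \mid v\in V_\lor\cup V_\land,\ \pi\in\mathit{SP}_\chi(v)\}$ and $e_\chi := e^-_\chi\cup\Delta_V$. $\chi$ is locally compatible with a color $c$ on a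 macrostate $m$ if (i) $\mathsf{Ran}(m;e_\chi)$ is compatible with $c$, and (ii) the stream $m;(e^-_\chi)^\omega$, i.e. $(m, e^-_\chi, e^-_\chi,\dots)$, has no bad trace. Demands. $d_\Box(m) := \{(u,\Omega(v),v)\mid u\in\mathsf{Ran}(m)\cap V_\Box,\ v\in E[u]\}$; for $x\in\mathsf{Ran}(m)\cap V_\Diamond$, $d_x(m) := \{(x,\Omega(v),v)\mid v\in E[x]\}\cup d_\Box(m)$. The automaton $\mathbb{A}_{\mathbb{G}}$: state set $M_\Omega$, initial state $m_I := \Delta_{v_I}$, acceptance condition $\mathrm{NBT}_\Omega$. For $m\in M_\Omega$ and local strategy $\chi$, $A_{m,\chi} := \{e_\chi; d_\Box(m;e_\chi)\}\cup\{e_\chi; d_x(m;e_\chi)\mid x\in\mathsf{Ran}(m;e_\chi)\cap V_\Diamond\}$; $\theta(m,c,\chi) := \nabla A_{m,\chi}$ if $\mathsf{Ran}(m;e_\chi)\cap V_\Diamond\neq\varnothing$, and $\theta(m,c,\chi):=\nabla A_{m,\chi}\lor\nabla\varnothing$ otherwise; $\Theta(m,c) := \bigvee\{\theta(m,c,\chi)\mid \chi \text{ a local strategy locally compatible with } c \text{ on } m\}$. *)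

theory Defs
  imports Main
begin

datatype 'p label = LTop | LBot | LLit 'p | LNLit 'p | LAnd | LOr | LDia | LBox | LEps

record ('v, 'p) pformula =
  pV  :: "'v set"
  pE  :: "('v \<times> 'v) set"
  pL  :: "'v \<Rightarrow> 'p label"
  pOm :: "'v \<Rightarrow> nat"
  pvI :: "'v"

definition succs :: "('v, 'p) pformula \<Rightarrow> 'v \<Rightarrow> 'v set" where
  "succs G v = {u. (v, u) \<in> pE G}"

definition Vlab :: "('v, 'p) pformula \<Rightarrow> 'p label \<Rightarrow> 'v set" where
  "Vlab G l = {v \<in> pV G. pL G v = l}"

definition is_literal_label :: "'p label \<Rightarrow> bool" where
  "is_literal_label l = (l = LTop \<or> l = LBot \<or> (\<exists>p. l = LLit p \<or> l = LNLit p))"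

text \<open>Well-formedness of a parity formula (with total priority map; the condition that
  every cycle meets the domain of the priority map is then automatic).\<close>
definition parity_formula :: "('v, 'p) pformula \<Rightarrow> bool" where
  "parity_formula G \<longleftrightarrow>
     finite (pV G) \<and> pvI G \<in> pV G \<and> pE G \<subseteq> pV G \<times> pV G \<and>
     (\<forall>v \<in> pV G. is_literal_label (pL G v) \<longrightarrow> succs G v = {}) \<and>
     (\<forall>v \<in> pV G. pL G v \<in> {LDia, LBox, LEps} \<longrightarrow> (\<exists>!u. u \<in> succs G v))"

section \<open>Two-player games (player True = \<exists>, False = \<forall>)\<close>

text \<open>A game: owner of each position, move sets, and the winning condition for \<exists> on
  infinite matches. A finite maximal match is lost by the owner of its last position
  (the stuck player).\<close>

definition path_ok :: "('q \<Rightarrow> 'q set) \<Rightarrow> 'q list \<Rightarrow> bool" where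
  "path_ok mv h \<longleftrightarrow> (\<forall>i. Suc i < length h \<longrightarrow> h ! Suc i \<in> mv (h ! i))"

definition consistent_fin :: "('q \<Rightarrow> bool) \<Rightarrow> ('q list \<Rightarrow> 'q) \<Rightarrow> 'q list \<Rightarrow> bool" where
  "consistent_fin own \<sigma> h \<longleftrightarrow>
     (\<forall>i. Suc i < length h \<longrightarrow> own (h ! i) \<longrightarrow> h ! Suc i = \<sigma> (take (Suc i) h))"

definition consistent_inf :: "('q \<Rightarrow> bool) \<Rightarrow> ('q list \<Rightarrow> 'q) \<Rightarrow> (nat \<Rightarrow> 'q) \<Rightarrow> bool" where
  "consistent_inf own \<sigma> \<pi> \<longleftrightarrow>
     (\<forall>i. own (\<pi> i) \<longrightarrow> \<pi> (Suc i) = \<sigma> (map \<pi> [0..<Suc i]))"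

definition E_winning_strategy ::
  "('q \<Rightarrow> bool) \<Rightarrow> ('q \<Rightarrow> 'q set) \<Rightarrow> ((nat \<Rightarrow> 'q) \<Rightarrow> bool) \<Rightarrow> ('q list \<Rightarrow> 'q) \<Rightarrow> 'q \<Rightarrow> bool" where
  "E_winning_strategy own mv W \<sigma> q \<longleftrightarrow>
     (\<forall>h. h \<noteq> [] \<and> hd h = q \<and> path_ok mv h \<and> consistent_fin own \<sigma> h \<longrightarrow>
          (own (last h) \<and> mv (last h) \<noteq> {} \<longrightarrow> \<sigma> h \<in> mv (last h)) \<and>
          (mv (last h) = {} \<longrightarrow> \<not> own (last h))) \<and>
     (\<forall>\<pi>. \<pi> 0 = q \<and> (\<forall>i. \<pi> (Suc i) \<in> mv (\<pi> i)) \<and> consistent_inf own \<sigma> \<pi> \<longrightarrow> W \<pi>)"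

definition E_wins ::
  "('q \<Rightarrow> bool) \<Rightarrow> ('q \<Rightarrow> 'q set) \<Rightarrow> ((nat \<Rightarrow> 'q) \<Rightarrow> bool) \<Rightarrow> 'q \<Rightarrow> bool" where
  "E_wins own mv W q \<longleftrightarrow> (\<exists>\<sigma>. E_winning_strategy own mv W \<sigma> q)"

definition inf_often :: "(nat \<Rightarrow> bool) \<Rightarrow> bool" where
  "inf_often P \<longleftrightarrow> (\<forall>n. \<exists>i>n. P i)"

section \<open>Evaluation game of a parity formula on a Kripke model (R, Val) with carrier UNIV\<close>

text \<open>Terminal (literal/constant) positions: \<exists> wins there iff the position is owned by \<forall>
  (who then is stuck).\<close>
fun eval_owner :: "('v, 'p) pformula \<Rightarrow> ('s \<Rightarrow> 'p set) \<Rightarrow> 'v \<times> 's \<Rightarrow> bool" where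
  "eval_owner G Val (v, s) =
     (case pL G v of
        LTop \<Rightarrow> False
      | LBot \<Rightarrow> True
      | LLit p \<Rightarrow> p \<notin> Val s
      | LNLit p \<Rightarrow> p \<in> Val s
      | LAnd \<Rightarrow> False
      | LOr \<Rightarrow> True
      | LDia \<Rightarrow> True
      | LBox \<Rightarrow> False
      | LEps \<Rightarrow> True)"

fun eval_moves :: "('v, 'p) pformula \<Rightarrow> 's rel \<Rightarrow> 'v \<times> 's \<Rightarrow> ('v \<times> 's) set" where
  "eval_moves G R (v, s) =
     (case pL G v of
        LAnd \<Rightarrow> {(u, s) | u. (v, u) \<in> pE G}
      | LOr \<Rightarrow> {(u, s) | u. (v, u) \<in> pE G}
      | LEps \<Rightarrow> {(u, s) | u. (v, u) \<in> pE G}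
      | LDia \<Rightarrow> {(u, t) | u t. (v, u) \<in> pE G \<and> (s, t) \<in> R}
      | LBox \<Rightarrow> {(u, t) | u t. (v, u) \<in> pE G \<and> (s, t) \<in> R}
      | _ \<Rightarrow> {})"

definition eval_wincond :: "('v, 'p) pformula \<Rightarrow> (nat \<Rightarrow> 'v \<times> 's) \<Rightarrow> bool" where
  "eval_wincond G \<pi> \<longleftrightarrow> even (Max {k. inf_often (\<lambda>i. pOm G (fst (\<pi> i)) = k)})"

definition eval_E_wins :: "('v, 'p) pformula \<Rightarrow> 's rel \<Rightarrow> ('s \<Rightarrow> 'p set) \<Rightarrow> 'v \<times> 's \<Rightarrow> bool" where
  "eval_E_wins G R Val q = E_wins (eval_owner G Val) (eval_moves G R) (eval_wincond G) q"

text \<open>Theta a c is a finite disjunction of cover formulas \<nabla>B, represented by the set of the B's.\<close>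
record ('a, 'p) dma =
  aStates :: "'a set"
  aTheta  :: "'a \<Rightarrow> 'p set \<Rightarrow> 'a set set"
  aAcc    :: "(nat \<Rightarrow> 'a) \<Rightarrow> bool"
  aInit   :: "'a"

definition nabla_sat :: "'x set \<Rightarrow> ('a \<Rightarrow> 'x set) \<Rightarrow> 'a set \<Rightarrow> bool" where
  "nabla_sat X U B \<longleftrightarrow> (\<forall>b \<in> B. \<exists>x \<in> X. x \<in> U b) \<and> (\<forall>x \<in> X. \<exists>b \<in> B. x \<in> U b)"

datatype ('a, 's) apos = ABasic 'a 's | AMark "'a \<Rightarrow> 's set"

fun acc_owner :: "('a, 's) apos \<Rightarrow> bool" where
  "acc_owner (ABasic a s) = True"
| "acc_owner (AMark U) = False"

fun acc_moves :: "('a, 'p) dma \<Rightarrow> 's rel \<Rightarrow> ('s \<Rightarrow> 'p set) \<Rightarrow> ('a, 's) apos \<Rightarrow> ('a, 's) apos set" where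
  "acc_moves A R Val (ABasic a s) =
     {AMark U | U. (\<forall>b. U b \<subseteq> R `` {s}) \<and> (\<forall>b. b \<notin> aStates A \<longrightarrow> U b = {}) \<and>
                   (\<exists>B \<in> aTheta A a (Val s). nabla_sat (R `` {s}) U B)}"
| "acc_moves A R Val (AMark U) = {ABasic b t | b t. b \<in> aStates A \<and> t \<in> U b}"

fun apos_state :: "('a, 's) apos \<Rightarrow> 'a" where
  "apos_state (ABasic a s) = a"
| "apos_state (AMark U) = undefined"

text \<open>Matches start at a basic position and alternate; the stream of states is read off
  the basic positions, i.e. the even indices.\<close>
definition acc_wincond :: "('a, 'p) dma \<Rightarrow> (nat \<Rightarrow> ('a, 's) apos) \<Rightarrow> bool" where
  "acc_wincond A \<pi> \<longleftrightarrow> aAcc A (\<lambda>i. apos_state (\<pi> (2 * i)))"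

definition acc_E_wins :: "('a, 'p) dma \<Rightarrow> 's rel \<Rightarrow> ('s \<Rightarrow> 'p set) \<Rightarrow> ('a, 's) apos \<Rightarrow> bool" where
  "acc_E_wins A R Val q = E_wins acc_owner (acc_moves A R Val) (acc_wincond A) q"

type_synonym 'v macro = "('v \<times> nat \<times> 'v) set"

definition Ran_m :: "'v macro \<Rightarrow> 'v set" where
  "Ran_m m = {v. \<exists>u k. (u, k, v) \<in> m}"

definition mcomp :: "'v macro \<Rightarrow> 'v macro \<Rightarrow> 'v macro" (infixl ";;" 70) where
  "m ;; m' = {(v, k, v'') | v k v''. \<exists>k' k'' v'. (v, k', v') \<in> m \<and> (v', k'', v'') \<in> m' \<and> k = max k' k''}"

definition Delta :: "'v set \<Rightarrow> 'v macro" where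
  "Delta U = {(u, 0, u) | u. u \<in> U}"

definition compatible :: "('v, 'p) pformula \<Rightarrow> 'v set \<Rightarrow> 'p set \<Rightarrow> bool" where
  "compatible G U c \<longleftrightarrow>
     (\<forall>u \<in> U. pL G u \<noteq> LBot \<and> (\<forall>p. pL G u = LLit p \<longrightarrow> p \<in> c) \<and> (\<forall>p. pL G u = LNLit p \<longrightarrow> p \<notin> c))"

definition bad_trace :: "(nat \<Rightarrow> 'v macro) \<Rightarrow> (nat \<Rightarrow> 'v) \<Rightarrow> (nat \<Rightarrow> nat) \<Rightarrow> bool" where
  "bad_trace ms vs ks \<longleftrightarrow>
     (\<forall>i. (vs i, ks i, vs (Suc i)) \<in> ms i) \<and> odd (Max {k. inf_often (\<lambda>i. ks i = k)})"

definition NBT :: "(nat \<Rightarrow> 'v macro) \<Rightarrow> bool" where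
  "NBT ms \<longleftrightarrow> \<not> (\<exists>vs ks. bad_trace ms vs ks)"

definition local_strategy :: "('v, 'p) pformula \<Rightarrow> ('v \<Rightarrow> 'v) \<Rightarrow> bool" where
  "local_strategy G \<chi> \<longleftrightarrow> (\<forall>v \<in> Vlab G LOr. \<chi> v \<in> succs G v)"

inductive_set SP :: "('v, 'p) pformula \<Rightarrow> ('v \<Rightarrow> 'v) \<Rightarrow> 'v \<Rightarrow> 'v list set"
  for G :: "('v, 'p) pformula" and \<chi> :: "'v \<Rightarrow> 'v" and v :: 'v where
  sp_or: "v \<in> Vlab G LOr \<Longrightarrow> [v, \<chi> v] \<in> SP G \<chi> v"
| sp_and: "v \<in> Vlab G LAnd \<Longrightarrow> w \<in> succs G v \<Longrightarrow> [v, w] \<in> SP G \<chi> v"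
| sp_or_step: "\<pi> \<in> SP G \<chi> v \<Longrightarrow> last \<pi> \<in> Vlab G LOr \<Longrightarrow> \<pi> @ [\<chi> (last \<pi>)] \<in> SP G \<chi> v"
| sp_and_step: "\<pi> \<in> SP G \<chi> v \<Longrightarrow> last \<pi> \<in> Vlab G LAnd \<Longrightarrow> w \<in> succs G (last \<pi>) \<Longrightarrow> \<pi> @ [w] \<in> SP G \<chi> v"

definition Om_path :: "('v, 'p) pformula \<Rightarrow> 'v list \<Rightarrow> nat" where
  "Om_path G \<pi> = Max (pOm G ` set (tl \<pi>))"

definition e_minus :: "('v, 'p) pformula \<Rightarrow> ('v \<Rightarrow> 'v) \<Rightarrow> 'v macro" where
  "e_minus G \<chi> = {(v, Om_path G \<pi>, last \<pi>) | v \<pi>. v \<in> Vlab G LOr \<union> Vlab G LAnd \<and> \<pi> \<in> SP G \<chi> v}"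

definition e_chi :: "('v, 'p) pformula \<Rightarrow> ('v \<Rightarrow> 'v) \<Rightarrow> 'v macro" where
  "e_chi G \<chi> = e_minus G \<chi> \<union> Delta (pV G)"

definition locally_compatible :: "('v, 'p) pformula \<Rightarrow> ('v \<Rightarrow> 'v) \<Rightarrow> 'p set \<Rightarrow> 'v macro \<Rightarrow> bool" where
  "locally_compatible G \<chi> c m \<longleftrightarrow>
     compatible G (Ran_m (m ;; e_chi G \<chi>)) c \<and>
     NBT (\<lambda>i. if i = 0 then m else e_minus G \<chi>)"

definition d_box :: "('v, 'p) pformula \<Rightarrow> 'v macro \<Rightarrow> 'v macro" where
  "d_box G m = {(u, pOm G v, v) | u v. u \<in> Ran_m m \<inter> Vlab G LBox \<and> v \<in> succs G u}"

definition d_dia :: "('v, 'p) pformula \<Rightarrow> 'v \<Rightarrow> 'v macro \<Rightarrow> 'v macro" where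
  "d_dia G x m = {(x, pOm G v, v) | v. v \<in> succs G x} \<union> d_box G m"

definition A_mchi :: "('v, 'p) pformula \<Rightarrow> 'v macro \<Rightarrow> ('v \<Rightarrow> 'v) \<Rightarrow> 'v macro set" where
  "A_mchi G m \<chi> =
     {e_chi G \<chi> ;; d_box G (m ;; e_chi G \<chi>)} \<union>
     {e_chi G \<chi> ;; d_dia G x (m ;; e_chi G \<chi>) | x. x \<in> Ran_m (m ;; e_chi G \<chi>) \<inter> Vlab G LDia}"

definition theta :: "('v, 'p) pformula \<Rightarrow> 'v macro \<Rightarrow> 'p set \<Rightarrow> ('v \<Rightarrow> 'v) \<Rightarrow> 'v macro set set" where
  "theta G m c \<chi> =
     (if Ran_m (m ;; e_chi G \<chi>) \<inter> Vlab G LDia \<noteq> {} then {A_mchi G m \<chi>}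
      else {A_mchi G m \<chi>, {}})"

definition Theta_G :: "('v, 'p) pformula \<Rightarrow> 'v macro \<Rightarrow> 'p set \<Rightarrow> 'v macro set set" where
  "Theta_G G m c = \<Union> {theta G m c \<chi> | \<chi>. local_strategy G \<chi> \<and> locally_compatible G \<chi> c m}"

definition macrostates :: "('v, 'p) pformula \<Rightarrow> 'v macro set" where
  "macrostates G = Pow (pV G \<times> pOm G ` pV G \<times> pV G)"

definition aut_G :: "('v, 'p) pformula \<Rightarrow> ('v macro, 'p) dma" where
  "aut_G G = \<lparr> aStates = macrostates G, aTheta = Theta_G G, aAcc = NBT,
               aInit = Delta {pvI G} \<rparr>"

end

theory Submission
  imports Defs
begin

text \<open>Both games are reduced to positional strategies in the evaluation game, which is a parity game
  with finitely many priorities and hence positionally determined (by induction on the largest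
  priority). If \<exists> wins positionally with f, then at every state s the strategy f induces a
  local strategy, and in the acceptance game \<exists> marks every successor of s with the box
  demands and the successor chosen by f at a diamond vertex with that diamond's demand. Every
  trace through the macrostates so produced is shadowed by a play consistent with f, so no trace
  is bad. If \<forall> wins positionally with g, then against any strategy of \<exists> in the
  acceptance game \<forall> can pick the successors so that the macrostates contain a trace
  shadowing a play consistent with g, which is bad. The shadowing plays are glued from the finite
  pieces of evaluation match that correspond to single trace steps; this grouping into nonempty
  segments does not change the largest priority seen infinitely often.\<close>

definition max_inf_often :: "(nat \<Rightarrow> nat) \<Rightarrow> nat" where
  "max_inf_often a = Max {k. inf_often (\<lambda>i. a i = k)}"

lemma inf_often_iff_frequently: "inf_often P \<longleftrightarrow> (\<exists>\<^sub>F i in sequentially. P i)"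
  unfolding inf_often_def frequently_sequentially
proof
  assume "\<forall>n. \<exists>i>n. P i"
  then show "\<forall>N. \<exists>n\<ge>N. P n" by (meson less_imp_le)
next
  assume "\<forall>N. \<exists>n\<ge>N. P n"
  then show "\<forall>n. \<exists>i>n. P i" by (metis Suc_le_eq)
qed

lemma frequently_sequentially_shift:
  "(\<exists>\<^sub>F i in sequentially. P (i + n)) \<longleftrightarrow> (\<exists>\<^sub>F i in sequentially. P i)"
  using eventually_sequentially_seg[of "\<lambda>i. \<not> P i" n] by (simp add: frequently_def)

context
  fixes a :: "nat \<Rightarrow> nat" and d :: nat
  assumes bounded: "\<And>i. a i \<le> d"
begin

private lemma finite_inf_often_values: "finite {k. inf_often (\<lambda>i. a i = k)}"
proof (rule finite_subset)
  show "{k. inf_often (\<lambda>i. a i = k)} \<subseteq> {..d}"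
  proof
    fix k assume "k \<in> {k. inf_often (\<lambda>i. a i = k)}"
    then obtain i where "a i = k" unfolding inf_often_def by blast
    then show "k \<in> {..d}" using bounded by auto
  qed
qed simp

private lemma frequently_in_finite:
  assumes "finite K" "\<exists>\<^sub>F i in sequentially. a i \<in> K"
  shows "\<exists>k\<in>K. inf_often (\<lambda>i. a i = k)"
proof -
  have "\<exists>\<^sub>F i in sequentially. \<exists>k\<in>K. a i = k"
    using assms(2) by simp
  from frequently_bex_finite[OF assms(1) this] show ?thesis
    by (simp add: inf_often_iff_frequently)
qed

lemma frequently_max_inf_often: "\<exists>\<^sub>F i in sequentially. a i = max_inf_often a"
proof -
  have "\<exists>\<^sub>F i in sequentially. a i \<in> {..d}"
    using bounded by (auto simp: frequently_sequentially)
  then have "{k. inf_often (\<lambda>i. a i = k)} \<noteq> {}"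
    using frequently_in_finite by blast
  then have "max_inf_often a \<in> {k. inf_often (\<lambda>i. a i = k)}"
    unfolding max_inf_often_def by (rule Max_in[OF finite_inf_often_values])
  then show ?thesis
    by (simp add: inf_often_iff_frequently)
qed

lemma eventually_le_max_inf_often: "\<forall>\<^sub>F i in sequentially. a i \<le> max_inf_often a"
proof (rule ccontr)
  assume "\<not> ?thesis"
  then have "\<exists>\<^sub>F i in sequentially. \<not> a i \<le> max_inf_often a"
    by (simp add: not_eventually)
  then have "\<exists>\<^sub>F i in sequentially. a i \<in> {max_inf_often a<..d}"
    by (rule frequently_mono[rotated]) (simp add: bounded)
  then obtain k where k: "k \<in> {max_inf_often a<..d}" "inf_often (\<lambda>i. a i = k)"
    using frequently_in_finite[of "{max_inf_often a<..d}"] by blast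
  have "k \<le> max_inf_often a"
    unfolding max_inf_often_def using k(2) by (intro Max_ge[OF finite_inf_often_values]) simp
  with k(1) show False
    by simp
qed

lemma max_inf_often_eqI:
  assumes "\<exists>\<^sub>F i in sequentially. a i = K" "\<forall>\<^sub>F i in sequentially. a i \<le> K"
  shows "max_inf_often a = K"
proof (rule antisym)
  have "\<exists>\<^sub>F i in sequentially. a i = max_inf_often a \<and> a i \<le> K"
    using frequently_max_inf_often assms(2) by (rule frequently_eventually_frequently)
  then show "max_inf_often a \<le> K"
    by (auto dest: frequently_ex)
  have "\<exists>\<^sub>F i in sequentially. a i = K \<and> a i \<le> max_inf_often a"
    using assms(1) eventually_le_max_inf_often by (rule frequently_eventually_frequently)
  then show "K \<le> max_inf_often a"
    by (auto dest: frequently_ex)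
qed

end

lemma max_inf_often_shift:
  assumes "\<And>i. a i \<le> d"
  shows "max_inf_often (\<lambda>i. a (i + n)) = max_inf_often a"
proof (rule max_inf_often_eqI)
  show "a (i + n) \<le> d" for i
    using assms .
  show "\<exists>\<^sub>F i in sequentially. a (i + n) = max_inf_often a"
    unfolding frequently_sequentially_shift[of "\<lambda>i. a i = max_inf_often a"]
    by (rule frequently_max_inf_often[of a d, OF assms])
  show "\<forall>\<^sub>F i in sequentially. a (i + n) \<le> max_inf_often a"
    unfolding eventually_sequentially_seg[of "\<lambda>i. a i \<le> max_inf_often a"]
    by (rule eventually_le_max_inf_often[of a d, OF assms])
qed

section \<open>Positional determinacy of parity games\<close>

definition confining ::
  "('q \<Rightarrow> bool) \<Rightarrow> ('q \<Rightarrow> 'q set) \<Rightarrow> bool \<Rightarrow> 'q set \<Rightarrow> 'q set \<Rightarrow> ('q \<Rightarrow> 'q) \<Rightarrow> bool" where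
  "confining own mv p T X f \<longleftrightarrow>
     (\<forall>r \<in> X - T. (own r = p \<longrightarrow> f r \<in> mv r \<and> f r \<in> X) \<and> (own r \<noteq> p \<longrightarrow> mv r \<subseteq> X))"

definition conforming_play ::
  "('q \<Rightarrow> bool) \<Rightarrow> ('q \<Rightarrow> 'q set) \<Rightarrow> bool \<Rightarrow> ('q \<Rightarrow> 'q) \<Rightarrow> 'q set \<Rightarrow> (nat \<Rightarrow> 'q) \<Rightarrow> bool" where
  "conforming_play own mv p f S \<pi> \<longleftrightarrow>
     (\<forall>n. \<pi> n \<in> S) \<and> (\<forall>n. \<pi> (Suc n) \<in> mv (\<pi> n)) \<and> (\<forall>n. own (\<pi> n) = p \<longrightarrow> \<pi> (Suc n) = f (\<pi> n))"

definition parity_wins :: "('q \<Rightarrow> nat) \<Rightarrow> bool \<Rightarrow> (nat \<Rightarrow> 'q) \<Rightarrow> bool" where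
  "parity_wins pr p \<pi> \<longleftrightarrow> (even (max_inf_often (\<lambda>i. pr (\<pi> i))) = p)"

definition positional_win ::
  "('q \<Rightarrow> bool) \<Rightarrow> ('q \<Rightarrow> 'q set) \<Rightarrow> ('q \<Rightarrow> nat) \<Rightarrow> bool \<Rightarrow> ('q \<Rightarrow> 'q) \<Rightarrow> 'q \<Rightarrow> bool" where
  "positional_win own mv pr p f q \<longleftrightarrow>
     (\<exists>X. q \<in> X \<and> confining own mv p {} X f \<and>
          (\<forall>\<pi>. conforming_play own mv p f X \<pi> \<longrightarrow> parity_wins pr p \<pi>))"

lemma parity_wins_suffix:
  assumes "\<And>q. pr q \<le> d"
  shows "parity_wins pr p (\<lambda>k. \<pi> (k + n)) \<longleftrightarrow> parity_wins pr p \<pi>"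
  unfolding parity_wins_def using max_inf_often_shift[of "\<lambda>i. pr (\<pi> i)" d n] assms by simp

lemma confining_stays:
  assumes "confining own mv p T X f" "\<pi> n \<in> X"
    and "\<And>k. n \<le> k \<Longrightarrow> \<pi> (Suc k) \<in> mv (\<pi> k)"
    and "\<And>k. n \<le> k \<Longrightarrow> \<pi> k \<in> X - T \<Longrightarrow> own (\<pi> k) = p \<Longrightarrow> \<pi> (Suc k) = f (\<pi> k)"
    and "\<And>k. n \<le> k \<Longrightarrow> \<pi> k \<notin> T"
  shows "\<pi> (n + k) \<in> X"
proof (induction k)
  case (Suc k)
  then have "\<pi> (n + k) \<in> X - T"
    using assms(5) by simp
  then show ?case
    using assms(1) assms(3,4)[of "n + k"] unfolding confining_def by (cases "own (\<pi> (n + k)) = p") auto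
qed (use assms(2) in simp)

lemma wf_nonincreasing_eventually_const:
  assumes "wf R" "\<And>n. a (Suc n) = a n \<or> (a (Suc n), a n) \<in> R"
  shows "\<exists>N. \<forall>n\<ge>N. a n = a N"
proof -
  obtain N where N: "\<And>y. (y, a N) \<in> R\<^sup>+ \<Longrightarrow> y \<notin> range a"
    using wfE_min[OF wf_trancl[OF assms(1)], of "a 0" "range a"] by blast
  have "(a n, a N) \<in> R\<^sup>*" if "n \<ge> N" for n
    using that
  proof (induction n rule: dec_induct)
    case (step n)
    then show ?case
      using assms(2)[of n] by (metis converse_rtrancl_into_rtrancl)
  qed simp
  then have "a n = a N" if "n \<ge> N" for n
    using N[of "a n"] that by (metis rangeI rtrancl_eq_or_trancl)
  then show ?thesis
    by blast
qed

lemma least_index_choice: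
  fixes Xs :: "'i \<Rightarrow> 'q set"
  shows "\<exists>r \<iota>. wf (r - Id) \<and> (\<forall>x\<in>(\<Union>i\<in>I. Xs i). \<iota> x \<in> I \<and> x \<in> Xs (\<iota> x) \<and>
                                   (\<forall>j\<in>I. x \<in> Xs j \<longrightarrow> j = \<iota> x \<or> (\<iota> x, j) \<in> r))"
proof -
  obtain r :: "'i rel" where "well_order_on UNIV r"
    using well_order_on by blast
  then have wf: "wf (r - Id)" and total: "total_on UNIV r"
    by (auto simp: well_order_on_def linear_order_on_def)
  have "\<exists>i. i \<in> I \<and> x \<in> Xs i \<and> (\<forall>j\<in>I. x \<in> Xs j \<longrightarrow> j = i \<or> (i, j) \<in> r)"
    if x: "x \<in> (\<Union>i\<in>I. Xs i)" for x
  proof -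
    obtain i0 where "i0 \<in> {i \<in> I. x \<in> Xs i}"
      using x by blast
    from wfE_min[OF wf this] obtain i
      where "i \<in> {i \<in> I. x \<in> Xs i}" "\<And>j. (j, i) \<in> r - Id \<Longrightarrow> j \<notin> {i \<in> I. x \<in> Xs i}"
      by blast
    then show ?thesis
      using total unfolding total_on_def by blast
  qed
  then have "\<forall>x\<in>(\<Union>i\<in>I. Xs i). \<exists>i. i \<in> I \<and> x \<in> Xs i \<and> (\<forall>j\<in>I. x \<in> Xs j \<longrightarrow> j = i \<or> (i, j) \<in> r)"
    by blast
  from bchoice[OF this] wf show ?thesis
    by blast
qed

text \<open>Along a play that always follows the strategy of the least region containing the current
  position, this index never increases, so it is eventually constant.\<close>
lemma least_index_play_settles:
  fixes Xs :: "'i \<Rightarrow> 'q set"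
  assumes wf: "wf (r - Id)"
    and \<iota>: "\<And>x. x \<in> (\<Union>i\<in>I. Xs i) \<Longrightarrow>
             \<iota> x \<in> I \<and> x \<in> Xs (\<iota> x) \<and> (\<forall>j\<in>I. x \<in> Xs j \<longrightarrow> j = \<iota> x \<or> (\<iota> x, j) \<in> r)"
    and confining: "\<And>i. i \<in> I \<Longrightarrow> confining own mv p T (Xs i) (fs i)"
    and play: "conforming_play own mv p (\<lambda>x. fs (\<iota> x) x) ((\<Union>i\<in>I. Xs i) - T) \<pi>"
  shows "\<exists>i\<in>I. \<exists>N. conforming_play own mv p (fs i) (Xs i - T) (\<lambda>k. \<pi> (k + N))"
proof -
  define a where "a n = \<iota> (\<pi> n)" for n
  have in_U: "\<pi> n \<in> (\<Union>i\<in>I. Xs i) - T" for n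
    using play unfolding conforming_play_def by blast
  have a: "a n \<in> I" "\<pi> n \<in> Xs (a n)" for n
    using \<iota> in_U unfolding a_def by blast+
  have next_in: "\<pi> (Suc n) \<in> Xs (a n)" for n
    using confining[OF a(1)[of n]] a(2)[of n] in_U[of n] play
    unfolding conforming_play_def confining_def a_def by (cases "own (\<pi> n) = p") auto
  have "a (Suc n) = a n \<or> (a (Suc n), a n) \<in> r - Id" for n
  proof -
    have "a n = a (Suc n) \<or> (a (Suc n), a n) \<in> r"
      using \<iota>[of "\<pi> (Suc n)"] in_U[of "Suc n"] next_in[of n] a(1)[of n] unfolding a_def by blast
    then show ?thesis
      by auto
  qed
  then obtain N where N: "\<forall>n\<ge>N. a n = a N"
    using wf_nonincreasing_eventually_const[OF wf] by blast
  have "conforming_play own mv p (fs (a N)) (Xs (a N) - T) (\<lambda>k. \<pi> (k + N))"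
    unfolding conforming_play_def
  proof (intro conjI allI impI)
    fix n
    have "a (n + N) = a N"
      using N[rule_format, of "n + N"] by simp
    then show "\<pi> (n + N) \<in> Xs (a N) - T"
      using a(2)[of "n + N"] in_U[of "n + N"] by simp
    show "\<pi> (Suc n + N) \<in> mv (\<pi> (n + N))"
      using play unfolding conforming_play_def by simp
    assume "own (\<pi> (n + N)) = p"
    then show "\<pi> (Suc n + N) = fs (a N) (\<pi> (n + N))"
      using play \<open>a (n + N) = a N\<close> unfolding conforming_play_def a_def by simp
  qed
  then show ?thesis
    using a(1) by blast
qed

lemma confining_UN:
  fixes Xs :: "'i \<Rightarrow> 'q set"
  assumes confining: "\<And>i. i \<in> I \<Longrightarrow> confining own mv p T (Xs i) (fs i)"
    and winning: "\<And>i \<pi>. i \<in> I \<Longrightarrow> conforming_play own mv p (fs i) (Xs i - T) \<pi> \<Longrightarrow> \<Phi> \<pi>"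
    and suffix_closed: "\<And>\<pi> n. \<Phi> (\<lambda>k. \<pi> (k + n)) \<Longrightarrow> \<Phi> \<pi>"
  obtains F where "confining own mv p T (\<Union>i\<in>I. Xs i) F"
    and "\<And>\<pi>. conforming_play own mv p F ((\<Union>i\<in>I. Xs i) - T) \<pi> \<Longrightarrow> \<Phi> \<pi>"
proof -
  obtain r :: "'i rel" and \<iota> where wf: "wf (r - Id)"
    and \<iota>_all: "\<forall>x\<in>(\<Union>i\<in>I. Xs i). \<iota> x \<in> I \<and> x \<in> Xs (\<iota> x) \<and>
                                  (\<forall>j\<in>I. x \<in> Xs j \<longrightarrow> j = \<iota> x \<or> (\<iota> x, j) \<in> r)"
    using least_index_choice[where I=I and Xs=Xs] by (elim exE conjE) blast
  have \<iota>: "\<iota> x \<in> I \<and> x \<in> Xs (\<iota> x) \<and> (\<forall>j\<in>I. x \<in> Xs j \<longrightarrow> j = \<iota> x \<or> (\<iota> x, j) \<in> r)"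
    if "x \<in> (\<Union>i\<in>I. Xs i)" for x
    using \<iota>_all that by blast
  have "confining own mv p T (\<Union>i\<in>I. Xs i) (\<lambda>x. fs (\<iota> x) x)"
    unfolding confining_def
  proof
    fix x assume x: "x \<in> (\<Union>i\<in>I. Xs i) - T"
    then have "\<iota> x \<in> I" "x \<in> Xs (\<iota> x) - T"
      using \<iota> by blast+
    with confining[of "\<iota> x"] show "(own x = p \<longrightarrow> fs (\<iota> x) x \<in> mv x \<and> fs (\<iota> x) x \<in> (\<Union>i\<in>I. Xs i)) \<and>
                                (own x \<noteq> p \<longrightarrow> mv x \<subseteq> (\<Union>i\<in>I. Xs i))"
      unfolding confining_def by blast
  qed
  moreover have "\<Phi> \<pi>" if "conforming_play own mv p (\<lambda>x. fs (\<iota> x) x) ((\<Union>i\<in>I. Xs i) - T) \<pi>" for \<pi>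
    using least_index_play_settles[OF wf \<iota> confining that] winning suffix_closed by blast
  ultimately show ?thesis
    by (rule that)
qed

lemma confining_insert:
  assumes confining: "confining own mv p T X f"
    and winning: "\<And>\<pi>. conforming_play own mv p f (X - T) \<pi> \<Longrightarrow> \<Phi> \<pi>"
    and suffix_closed: "\<And>\<pi> n. \<Phi> (\<lambda>k. \<pi> (k + n)) \<Longrightarrow> \<Phi> \<pi>"
    and r: "r \<notin> X" "r \<notin> T"
    and step: "(own r = p \<and> r' \<in> mv r \<and> r' \<in> X) \<or> (own r \<noteq> p \<and> mv r \<subseteq> X)"
  shows "confining own mv p T (insert r X) (f(r := r'))"
    and "\<And>\<pi>. conforming_play own mv p (f(r := r')) (insert r X - T) \<pi> \<Longrightarrow> \<Phi> \<pi>"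
proof -
  show "confining own mv p T (insert r X) (f(r := r'))"
    using confining step r unfolding confining_def by auto
next
  fix \<pi> assume play: "conforming_play own mv p (f(r := r')) (insert r X - T) \<pi>"
  have "\<pi> (Suc n) \<in> X" for n
  proof (cases "\<pi> n = r")
    case True
    then show ?thesis
      using play step unfolding conforming_play_def by (cases "own r = p") auto
  next
    case False
    then have "\<pi> n \<in> X - T"
      using play unfolding conforming_play_def by blast
    then show ?thesis
      using play confining False unfolding conforming_play_def confining_def
      by (cases "own (\<pi> n) = p") auto
  qed
  then have "conforming_play own mv p f (X - T) (\<lambda>k. \<pi> (k + 1))"
    using play r unfolding conforming_play_def by auto
  then show "\<Phi> \<pi>"
    using winning suffix_closed by blast
qed

definition positional_region ::
  "'q set \<Rightarrow> ('q \<Rightarrow> bool) \<Rightarrow> ('q \<Rightarrow> 'q set) \<Rightarrow> bool \<Rightarrow> 'q set \<Rightarrow> ((nat \<Rightarrow> 'q) \<Rightarrow> bool) \<Rightarrow> 'q set"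
  where
  "positional_region A own mv p T \<Phi> =
     \<Union>{X. X \<subseteq> A \<and> (\<exists>f. confining own mv p T X f \<and>
                           (\<forall>\<pi>. conforming_play own mv p f (X - T) \<pi> \<longrightarrow> \<Phi> \<pi>))}"

lemma positional_region_subset: "positional_region A own mv p T \<Phi> \<subseteq> A"
  unfolding positional_region_def by blast

lemma subset_positional_regionI:
  assumes "X \<subseteq> A" "confining own mv p T X f"
    and "\<And>\<pi>. conforming_play own mv p f (X - T) \<pi> \<Longrightarrow> \<Phi> \<pi>"
  shows "X \<subseteq> positional_region A own mv p T \<Phi>"
  using assms unfolding positional_region_def by blast

context
  fixes A :: "'q set" and own :: "'q \<Rightarrow> bool" and mv :: "'q \<Rightarrow> 'q set" and p :: bool and T :: "'q set"
    and \<Phi> :: "(nat \<Rightarrow> 'q) \<Rightarrow> bool"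
  assumes suffix_closed: "\<And>\<pi> n. \<Phi> (\<lambda>k. \<pi> (k + n)) \<Longrightarrow> \<Phi> \<pi>"
begin

lemma positional_region_strategy:
  obtains F where "confining own mv p T (positional_region A own mv p T \<Phi>) F"
    and "\<And>\<pi>. conforming_play own mv p F (positional_region A own mv p T \<Phi> - T) \<pi> \<Longrightarrow> \<Phi> \<pi>"
proof -
  define good where "good X f \<longleftrightarrow> confining own mv p T X f \<and>
                         (\<forall>\<pi>. conforming_play own mv p f (X - T) \<pi> \<longrightarrow> \<Phi> \<pi>)" for X f
  define I where "I = {X. X \<subseteq> A \<and> (\<exists>f. good X f)}"
  have good: "good X (SOME f. good X f)" if "X \<in> I" for X
    using that someI_ex[of "good X"] unfolding I_def by blast
  obtain F where "confining own mv p T (\<Union>X\<in>I. X) F"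
    "\<And>\<pi>. conforming_play own mv p F ((\<Union>X\<in>I. X) - T) \<pi> \<Longrightarrow> \<Phi> \<pi>"
  proof (rule confining_UN[of I own mv p T "\<lambda>X. X" "\<lambda>X. SOME f. good X f" \<Phi>])
    show "confining own mv p T X (SOME f. good X f)" if "X \<in> I" for X
      using good[OF that] unfolding good_def by blast
    show "\<Phi> \<pi>" if "X \<in> I" "conforming_play own mv p (SOME f. good X f) (X - T) \<pi>" for X \<pi>
      using good[OF that(1)] that(2) unfolding good_def by blast
    show "\<Phi> \<pi>" if "\<Phi> (\<lambda>k. \<pi> (k + n))" for \<pi> n
      using that by (rule suffix_closed)
  qed (rule that)
  moreover have "(\<Union>X\<in>I. X) = positional_region A own mv p T \<Phi>"
    unfolding positional_region_def I_def good_def by simp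
  ultimately show ?thesis
    using that by simp
qed

lemma positional_region_closed:
  assumes "r \<in> A" "r \<notin> T"
    and "(own r = p \<and> r' \<in> mv r \<and> r' \<in> positional_region A own mv p T \<Phi>) \<or>
         (own r \<noteq> p \<and> mv r \<subseteq> positional_region A own mv p T \<Phi>)"
  shows "r \<in> positional_region A own mv p T \<Phi>"
proof (rule ccontr)
  let ?W = "positional_region A own mv p T \<Phi>"
  assume "r \<notin> ?W"
  obtain F where F: "confining own mv p T ?W F"
    and F_wins: "\<And>\<pi>. conforming_play own mv p F (?W - T) \<pi> \<Longrightarrow> \<Phi> \<pi>"
    by (rule positional_region_strategy) (rule that)
  have "insert r ?W \<subseteq> ?W"
  proof (rule subset_positional_regionI)
    show "insert r ?W \<subseteq> A"
      using assms(1) positional_region_subset[of A own mv p T \<Phi>] by blast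
    show "confining own mv p T (insert r ?W) (F(r := r'))"
      by (rule confining_insert(1)[where \<Phi>=\<Phi>, OF F F_wins suffix_closed \<open>r \<notin> ?W\<close> assms(2,3)])
    show "\<Phi> \<pi>" if "conforming_play own mv p (F(r := r')) (insert r ?W - T) \<pi>" for \<pi>
      by (rule confining_insert(2)[where \<Phi>=\<Phi>, OF F F_wins suffix_closed \<open>r \<notin> ?W\<close> assms(2,3) that])
  qed
  with \<open>r \<notin> ?W\<close> show False
    by blast
qed

end

text \<open>The top priority d favours player \<open>even d\<close>. Remove the largest
  region opp_win that the other player wins positionally, then the favoured player's attractor attr
  to the top-priority positions; the remaining subgame sub has smaller priorities. The opponent
  wins nowhere in sub, since opp_win would otherwise grow, so by induction the favoured player
  wins all of sub and hence everywhere outside opp_win.\<close>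

locale bounded_parity_game =
  fixes own :: "'q \<Rightarrow> bool" and mv :: "'q \<Rightarrow> 'q set" and pr :: "'q \<Rightarrow> nat" and d :: nat
  assumes pr_le: "pr q \<le> d"
begin

lemma parity_wins_suffix_closed: "parity_wins pr p (\<lambda>k. \<pi> (k + n)) \<Longrightarrow> parity_wins pr p \<pi>"
  using parity_wins_suffix[of pr d] pr_le by blast

definition opp_win :: "'q set" where
  "opp_win = positional_region UNIV own mv (odd d) {} (parity_wins pr (odd d))"

definition top_prio :: "'q set" where
  "top_prio = {r. r \<notin> opp_win \<and> pr r = d}"

text \<open>With the winning condition False this region is the attractor to top_prio: every play
  consistent with the strategy reaches top_prio.\<close>
definition attr :: "'q set" where
  "attr = positional_region (- opp_win) own (\<lambda>r. mv r - opp_win) (even d) top_prio (\<lambda>_. False)"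

definition sub :: "'q set" where
  "sub = - opp_win - attr"

definition sub_moves :: "'q \<Rightarrow> 'q set" where
  "sub_moves r = mv r \<inter> sub"

definition sub_pr :: "'q \<Rightarrow> nat" where
  "sub_pr r = (if r \<in> sub then pr r else 0)"

lemma opp_win_strategy:
  obtains g where "confining own mv (odd d) {} opp_win g"
    and "\<And>\<pi>. conforming_play own mv (odd d) g opp_win \<pi> \<Longrightarrow> parity_wins pr (odd d) \<pi>"
proof -
  obtain g where "confining own mv (odd d) {} opp_win g"
    "\<And>\<pi>. conforming_play own mv (odd d) g (opp_win - {}) \<pi> \<Longrightarrow> parity_wins pr (odd d) \<pi>"
    unfolding opp_win_def
  proof (rule positional_region_strategy[where A=UNIV and own=own and mv=mv and p="odd d"
                                           and T="{}" and \<Phi>="parity_wins pr (odd d)"])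
    show "parity_wins pr (odd d) \<pi>" if "parity_wins pr (odd d) (\<lambda>k. \<pi> (k + n))" for \<pi> n
      using that by (rule parity_wins_suffix_closed)
  qed (rule that[unfolded opp_win_def])
  then show ?thesis
    using that by simp
qed

lemma subset_opp_winI:
  assumes "confining own mv (odd d) {} X g"
    and "\<And>\<pi>. conforming_play own mv (odd d) g X \<pi> \<Longrightarrow> parity_wins pr (odd d) \<pi>"
  shows "X \<subseteq> opp_win"
  unfolding opp_win_def using assms by (intro subset_positional_regionI) auto

lemma opp_win_closed:
  assumes "(own r = odd d \<and> r' \<in> mv r \<and> r' \<in> opp_win) \<or> (own r = even d \<and> mv r \<subseteq> opp_win)"
  shows "r \<in> opp_win"
  unfolding opp_win_def
proof (rule positional_region_closed[where A=UNIV and own=own and mv=mv and p="odd d"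
                                       and T="{}" and \<Phi>="parity_wins pr (odd d)" and r'=r'])
  show "parity_wins pr (odd d) \<pi>" if "parity_wins pr (odd d) (\<lambda>k. \<pi> (k + n))" for \<pi> n
    using that by (rule parity_wins_suffix_closed)
qed (use assms in \<open>auto simp: opp_win_def\<close>)

lemma opp_move_avoids_opp_win: "r \<notin> opp_win \<Longrightarrow> own r = odd d \<Longrightarrow> r' \<in> mv r \<Longrightarrow> r' \<notin> opp_win"
  using opp_win_closed[of r r'] by blast

lemma fav_move_avoiding_opp_win: "r \<notin> opp_win \<Longrightarrow> own r = even d \<Longrightarrow> \<exists>r'\<in>mv r. r' \<notin> opp_win"
  using opp_win_closed[of r] by blast

lemma attr_subset: "attr \<subseteq> - opp_win"
  unfolding attr_def by (rule positional_region_subset)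

lemma top_prio_subset_attr: "top_prio \<subseteq> attr"
  unfolding attr_def
proof (rule subset_positional_regionI)
  show "top_prio \<subseteq> - opp_win"
    unfolding top_prio_def by blast
  show "confining own (\<lambda>r. mv r - opp_win) (even d) top_prio top_prio id"
    unfolding confining_def by blast
  show "False" if "conforming_play own (\<lambda>r. mv r - opp_win) (even d) id (top_prio - top_prio) \<pi>"
    for \<pi>
    using that unfolding conforming_play_def by blast
qed

lemma attr_strategy:
  obtains f where "confining own (\<lambda>r. mv r - opp_win) (even d) top_prio attr f"
    and "\<And>\<pi>. conforming_play own (\<lambda>r. mv r - opp_win) (even d) f (attr - top_prio) \<pi> \<Longrightarrow> False"
  unfolding attr_def
proof (rule positional_region_strategy[where A="- opp_win" and own=own and mv="\<lambda>r. mv r - opp_win"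
                                         and p="even d" and T=top_prio and \<Phi>="\<lambda>_. False"])
  show False if False
    using that .
qed (rule that[unfolded attr_def])

lemma fav_move_avoids_attr:
  assumes "r \<in> sub" "own r = even d" "r' \<in> mv r"
  shows "r' \<notin> attr"
proof
  assume "r' \<in> attr"
  have "r \<in> attr"
    unfolding attr_def
  proof (rule positional_region_closed[where A="- opp_win" and own=own and mv="\<lambda>r. mv r - opp_win"
                                         and p="even d" and T=top_prio and \<Phi>="\<lambda>_. False" and r'=r'])
    show "r \<in> - opp_win" "r \<notin> top_prio"
      using assms(1) top_prio_subset_attr unfolding sub_def by auto
    show "own r = even d \<and> r' \<in> mv r - opp_win \<and> r' \<in> positional_region (- opp_win) own
            (\<lambda>r. mv r - opp_win) (even d) top_prio (\<lambda>_. False) \<or>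
          own r \<noteq> even d \<and> mv r - opp_win \<subseteq> positional_region (- opp_win) own
            (\<lambda>r. mv r - opp_win) (even d) top_prio (\<lambda>_. False)"
      using assms(2,3) \<open>r' \<in> attr\<close> attr_subset unfolding attr_def by blast
  qed simp
  then show False
    using assms(1) unfolding sub_def by blast
qed

lemma sub_pr_less: "r \<in> sub \<Longrightarrow> pr r < d"
  using pr_le[of r] top_prio_subset_attr unfolding sub_def top_prio_def by fastforce

lemma sub_pr_le: "sub_pr q \<le> d - 1"
  using sub_pr_less[of q] unfolding sub_pr_def by auto

lemma opp_extension_confining:
  assumes g: "confining own sub_moves (odd d) {} X g"
    and gY: "confining own mv (odd d) {} opp_win gY"
  shows "confining own mv (odd d) {} (X \<inter> sub \<union> opp_win) (\<lambda>x. if x \<in> opp_win then gY x else g x)"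
proof -
  let ?X = "X \<inter> sub \<union> opp_win" and ?h = "\<lambda>x. if x \<in> opp_win then gY x else g x"
  have "(own x = odd d \<longrightarrow> ?h x \<in> mv x \<and> ?h x \<in> ?X) \<and> (own x \<noteq> odd d \<longrightarrow> mv x \<subseteq> ?X)"
    if "x \<in> ?X" for x
  proof (cases "x \<in> opp_win")
    case True
    then show ?thesis
      using gY unfolding confining_def by auto
  next
    case False
    then have x: "x \<in> X" "x \<in> sub"
      using that by auto
    have "mv x \<subseteq> ?X" if "own x = even d"
    proof
      fix y assume "y \<in> mv x"
      show "y \<in> ?X"
      proof (cases "y \<in> opp_win")
        case False
        then have "y \<in> sub"
          using fav_move_avoids_attr[OF x(2) \<open>own x = even d\<close> \<open>y \<in> mv x\<close>] unfolding sub_def by blast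
        then have "y \<in> X"
          using g x \<open>own x = even d\<close> \<open>y \<in> mv x\<close> unfolding confining_def sub_moves_def by auto
        with \<open>y \<in> sub\<close> show ?thesis
          by blast
      qed blast
    qed
    then show ?thesis
      using g x False unfolding confining_def sub_moves_def by auto
  qed
  then show ?thesis
    unfolding confining_def by blast
qed

lemma opp_extension_wins:
  assumes g_wins: "\<And>\<pi>. conforming_play own sub_moves (odd d) g X \<pi> \<Longrightarrow> parity_wins sub_pr (odd d) \<pi>"
    and gY: "confining own mv (odd d) {} opp_win gY"
    and gY_wins: "\<And>\<pi>. conforming_play own mv (odd d) gY opp_win \<pi> \<Longrightarrow> parity_wins pr (odd d) \<pi>"
    and play: "conforming_play own mv (odd d) (\<lambda>x. if x \<in> opp_win then gY x else g x)
                 (X \<inter> sub \<union> opp_win) \<pi>"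
  shows "parity_wins pr (odd d) \<pi>"
proof (cases "\<exists>n. \<pi> n \<in> opp_win")
  case True
  then obtain n where n: "\<pi> n \<in> opp_win"
    by blast
  have stay: "\<pi> (n + k) \<in> opp_win" for k
    by (rule confining_stays[where \<pi>=\<pi> and n=n, OF gY n]) (use play in \<open>auto simp: conforming_play_def\<close>)
  have "conforming_play own mv (odd d) gY opp_win (\<lambda>k. \<pi> (k + n))"
    using play stay unfolding conforming_play_def by (auto simp: add.commute)
  then show ?thesis
    using gY_wins parity_wins_suffix_closed by blast
next
  case False
  then have in_sub: "\<pi> n \<in> X \<and> \<pi> n \<in> sub" for n
    using play unfolding conforming_play_def by blast
  have "conforming_play own sub_moves (odd d) g X \<pi>"
    using play in_sub False unfolding conforming_play_def sub_moves_def by auto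
  then have "parity_wins sub_pr (odd d) \<pi>"
    by (rule g_wins)
  moreover have "(\<lambda>i. sub_pr (\<pi> i)) = (\<lambda>i. pr (\<pi> i))"
    using in_sub unfolding sub_pr_def by auto
  ultimately show ?thesis
    unfolding parity_wins_def by simp
qed

lemma no_opp_win_in_sub:
  assumes "r \<in> sub"
  shows "\<not> positional_win own sub_moves sub_pr (odd d) g r"
proof
  assume "positional_win own sub_moves sub_pr (odd d) g r"
  then obtain X where "r \<in> X" and g: "confining own sub_moves (odd d) {} X g"
    and g_wins: "\<And>\<pi>. conforming_play own sub_moves (odd d) g X \<pi> \<Longrightarrow> parity_wins sub_pr (odd d) \<pi>"
    unfolding positional_win_def by blast
  obtain gY where gY: "confining own mv (odd d) {} opp_win gY"
    and gY_wins: "\<And>\<pi>. conforming_play own mv (odd d) gY opp_win \<pi> \<Longrightarrow> parity_wins pr (odd d) \<pi>"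
    by (rule opp_win_strategy) (rule that)
  have "X \<inter> sub \<union> opp_win \<subseteq> opp_win"
  proof (rule subset_opp_winI)
    show "confining own mv (odd d) {} (X \<inter> sub \<union> opp_win) (\<lambda>x. if x \<in> opp_win then gY x else g x)"
      using g gY by (rule opp_extension_confining)
    show "parity_wins pr (odd d) \<pi>"
      if "conforming_play own mv (odd d) (\<lambda>x. if x \<in> opp_win then gY x else g x) (X \<inter> sub \<union> opp_win) \<pi>"
      for \<pi>
      using g_wins gY gY_wins that by (rule opp_extension_wins)
  qed
  then show False
    using \<open>r \<in> X\<close> assms unfolding sub_def by blast
qed

lemma sub_fav_strategy:
  assumes fav_wins: "\<And>r. r \<in> sub \<Longrightarrow> \<exists>f. positional_win own sub_moves sub_pr (even d) f r"
  obtains f W where "sub \<subseteq> W" "confining own sub_moves (even d) {} W f"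
    and "\<And>\<pi>. conforming_play own sub_moves (even d) f W \<pi> \<Longrightarrow> parity_wins sub_pr (even d) \<pi>"
proof -
  let ?W = "positional_region UNIV own sub_moves (even d) {} (parity_wins sub_pr (even d))"
  have sub_pr_le_d: "sub_pr q \<le> d" for q
    using sub_pr_le[of q] by linarith
  have "sub \<subseteq> ?W"
  proof
    fix r assume "r \<in> sub"
    then obtain f X where "r \<in> X" "confining own sub_moves (even d) {} X f"
      "\<forall>\<pi>. conforming_play own sub_moves (even d) f X \<pi> \<longrightarrow> parity_wins sub_pr (even d) \<pi>"
      using fav_wins unfolding positional_win_def by blast
    then have "X \<subseteq> ?W"
      by (intro subset_positional_regionI) auto
    with \<open>r \<in> X\<close> show "r \<in> ?W"
      by blast
  qed
  moreover obtain f where "confining own sub_moves (even d) {} ?W f"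
    "\<And>\<pi>. conforming_play own sub_moves (even d) f (?W - {}) \<pi> \<Longrightarrow> parity_wins sub_pr (even d) \<pi>"
  proof (rule positional_region_strategy[where A=UNIV and own=own and mv=sub_moves and p="even d"
                                           and T="{}" and \<Phi>="parity_wins sub_pr (even d)"])
    show "parity_wins sub_pr (even d) \<pi>" if "parity_wins sub_pr (even d) (\<lambda>k. \<pi> (k + n))" for \<pi> n
      using that parity_wins_suffix[of sub_pr d] sub_pr_le_d by blast
  qed (rule that)
  ultimately show ?thesis
    using that by simp
qed

definition fav_strategy :: "('q \<Rightarrow> 'q) \<Rightarrow> ('q \<Rightarrow> 'q) \<Rightarrow> 'q \<Rightarrow> 'q" where
  "fav_strategy fS fA x =
     (if x \<in> sub then fS x
      else if x \<in> attr - top_prio then fA x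
      else (SOME y. y \<in> mv x \<and> y \<notin> opp_win))"

lemma fav_strategy_confining:
  assumes fS: "sub \<subseteq> W" "confining own sub_moves (even d) {} W fS"
    and fA: "confining own (\<lambda>r. mv r - opp_win) (even d) top_prio attr fA"
  shows "confining own mv (even d) {} (- opp_win) (fav_strategy fS fA)"
proof -
  have "fav_strategy fS fA x \<in> mv x \<and> fav_strategy fS fA x \<notin> opp_win"
    if x: "x \<notin> opp_win" "own x = even d" for x
  proof (cases "x \<in> sub")
    case True
    then show ?thesis
      using fS x unfolding confining_def sub_moves_def fav_strategy_def sub_def by auto
  next
    case False
    show ?thesis
    proof (cases "x \<in> top_prio")
      case False
      with \<open>x \<notin> sub\<close> x(1) have "x \<in> attr - top_prio"
        unfolding sub_def by blast
      then show ?thesis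
        using fA x \<open>x \<notin> sub\<close> unfolding confining_def fav_strategy_def by auto
    next
      case True
      have "\<exists>y. y \<in> mv x \<and> y \<notin> opp_win"
        using fav_move_avoiding_opp_win[OF x] by blast
      then have "(SOME y. y \<in> mv x \<and> y \<notin> opp_win) \<in> mv x \<and> (SOME y. y \<in> mv x \<and> y \<notin> opp_win) \<notin> opp_win"
        by (rule someI_ex)
      then show ?thesis
        using \<open>x \<notin> sub\<close> True unfolding fav_strategy_def by simp
    qed
  qed
  moreover have "mv x \<subseteq> - opp_win" if "x \<notin> opp_win" "own x \<noteq> even d" for x
    using opp_move_avoids_opp_win[of x] that by auto
  ultimately show ?thesis
    unfolding confining_def by auto
qed

lemma fav_strategy_wins:
  assumes fS: "sub \<subseteq> W"
    and fS_wins: "\<And>\<pi>. conforming_play own sub_moves (even d) fS W \<pi> \<Longrightarrow> parity_wins sub_pr (even d) \<pi>"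
    and fA: "confining own (\<lambda>r. mv r - opp_win) (even d) top_prio attr fA"
    and fA_wins: "\<And>\<pi>. conforming_play own (\<lambda>r. mv r - opp_win) (even d) fA (attr - top_prio) \<pi> \<Longrightarrow> False"
    and play: "conforming_play own mv (even d) (fav_strategy fS fA) (- opp_win) \<pi>"
  shows "parity_wins pr (even d) \<pi>"
proof (cases "\<exists>\<^sub>F n in sequentially. \<pi> n \<in> top_prio")
  case True
  then have "\<exists>\<^sub>F n in sequentially. pr (\<pi> n) = d"
    by (rule frequently_mono[rotated]) (simp add: top_prio_def)
  then have "max_inf_often (\<lambda>n. pr (\<pi> n)) = d"
    by (rule max_inf_often_eqI[OF pr_le]) (simp add: pr_le)
  then show ?thesis
    unfolding parity_wins_def by simp
next
  case False
  then obtain N where N: "\<And>n. n \<ge> N \<Longrightarrow> \<pi> n \<notin> top_prio"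
    by (auto simp: not_frequently eventually_sequentially)
  have moves: "\<pi> (Suc k) \<in> mv (\<pi> k) - opp_win" for k
    using play unfolding conforming_play_def by auto
  have not_attr: "\<pi> n \<notin> attr" if "n \<ge> N" for n
  proof
    assume "\<pi> n \<in> attr"
    have follows_fA: "\<pi> (Suc k) = fA (\<pi> k)" if "\<pi> k \<in> attr - top_prio" "own (\<pi> k) = even d" for k
      using play that unfolding conforming_play_def fav_strategy_def sub_def by auto
    have "\<pi> (n + k) \<in> attr" for k
      by (rule confining_stays[where \<pi>=\<pi> and n=n, OF fA \<open>\<pi> n \<in> attr\<close>])
         (use moves follows_fA N \<open>n \<ge> N\<close> in auto)
    then have "conforming_play own (\<lambda>r. mv r - opp_win) (even d) fA (attr - top_prio) (\<lambda>k. \<pi> (k + n))"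
      using moves follows_fA N \<open>n \<ge> N\<close> unfolding conforming_play_def by (auto simp: add.commute)
    then show False
      by (rule fA_wins)
  qed
  have in_sub: "\<pi> n \<in> sub" if "n \<ge> N" for n
    using not_attr[OF that] play unfolding conforming_play_def sub_def by auto
  have "conforming_play own sub_moves (even d) fS W (\<lambda>k. \<pi> (k + N))"
    using in_sub fS moves play unfolding conforming_play_def sub_moves_def fav_strategy_def by auto
  then have "parity_wins sub_pr (even d) (\<lambda>k. \<pi> (k + N))"
    by (rule fS_wins)
  moreover have "(\<lambda>i. sub_pr (\<pi> (i + N))) = (\<lambda>i. pr (\<pi> (i + N)))"
    using in_sub unfolding sub_pr_def by auto
  ultimately have "parity_wins pr (even d) (\<lambda>k. \<pi> (k + N))"
    unfolding parity_wins_def by simp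
  then show ?thesis
    by (rule parity_wins_suffix_closed)
qed

lemma positional_determinacy_step:
  assumes sub_determined: "\<And>r. r \<in> sub \<Longrightarrow>
      (\<exists>f. positional_win own sub_moves sub_pr True f r) \<or> (\<exists>g. positional_win own sub_moves sub_pr False g r)"
  shows "(\<exists>f. positional_win own mv pr True f q) \<or> (\<exists>g. positional_win own mv pr False g q)"
proof -
  have fav_wins_sub: "\<exists>f. positional_win own sub_moves sub_pr (even d) f r" if "r \<in> sub" for r
    using sub_determined[OF that] no_opp_win_in_sub[OF that] by (cases "even d") auto
  obtain fS W where fS: "sub \<subseteq> W" "confining own sub_moves (even d) {} W fS"
    and fS_wins: "\<And>\<pi>. conforming_play own sub_moves (even d) fS W \<pi> \<Longrightarrow> parity_wins sub_pr (even d) \<pi>"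
    by (rule sub_fav_strategy[OF fav_wins_sub]) (assumption, rule that)
  obtain fA where fA: "confining own (\<lambda>r. mv r - opp_win) (even d) top_prio attr fA"
    and fA_wins: "\<And>\<pi>. conforming_play own (\<lambda>r. mv r - opp_win) (even d) fA (attr - top_prio) \<pi> \<Longrightarrow> False"
    by (rule attr_strategy) (rule that)
  obtain g where g: "confining own mv (odd d) {} opp_win g"
    and g_wins: "\<And>\<pi>. conforming_play own mv (odd d) g opp_win \<pi> \<Longrightarrow> parity_wins pr (odd d) \<pi>"
    by (rule opp_win_strategy) (rule that)
  have "positional_win own mv pr (even d) (fav_strategy fS fA) q" if "q \<notin> opp_win"
    unfolding positional_win_def
  proof (intro exI[of _ "- opp_win"] conjI allI impI)
    show "q \<in> - opp_win"
      using that by simp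
    show "confining own mv (even d) {} (- opp_win) (fav_strategy fS fA)"
      using fS fA by (rule fav_strategy_confining)
    show "parity_wins pr (even d) \<pi>"
      if "conforming_play own mv (even d) (fav_strategy fS fA) (- opp_win) \<pi>" for \<pi>
      using fS(1) fS_wins fA fA_wins that by (rule fav_strategy_wins)
  qed
  moreover have "positional_win own mv pr (odd d) g q" if "q \<in> opp_win"
    unfolding positional_win_def using that g g_wins by (intro exI[of _ opp_win]) simp
  ultimately show ?thesis
    by (cases "even d"; cases "q \<in> opp_win") auto
qed

end

theorem positional_determinacy:
  fixes pr :: "'q \<Rightarrow> nat"
  assumes "\<And>q. pr q \<le> d"
  shows "(\<exists>f. positional_win own mv pr True f q) \<or> (\<exists>g. positional_win own mv pr False g q)"
  using assms
proof (induction d arbitrary: mv pr q rule: less_induct)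
  case (less d)
  interpret bounded_parity_game own mv pr d
    by standard (rule less.prems)
  show ?case
  proof (rule positional_determinacy_step)
    fix r assume "r \<in> sub"
    then have "d - 1 < d"
      using sub_pr_less by fastforce
    then show "(\<exists>f. positional_win own sub_moves sub_pr True f r) \<or>
               (\<exists>g. positional_win own sub_moves sub_pr False g r)"
      using less.IH sub_pr_le by blast
  qed
qed

section \<open>From positional to history-dependent strategies\<close>

lemma path_ok_iff_successively: "path_ok mv h \<longleftrightarrow> successively (\<lambda>a b. b \<in> mv a) h"
  unfolding path_ok_def successively_conv_nth ..

lemma path_ok_snoc: "path_ok mv (h @ [x]) \<longleftrightarrow> path_ok mv h \<and> (h \<noteq> [] \<longrightarrow> x \<in> mv (last h))"
  by (auto simp: path_ok_iff_successively successively_append_iff)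

lemma consistent_fin_snoc:
  "consistent_fin own \<sigma> (h @ [x]) \<longleftrightarrow>
     consistent_fin own \<sigma> h \<and> (h \<noteq> [] \<longrightarrow> own (last h) \<longrightarrow> x = \<sigma> h)"
proof
  assume a: "consistent_fin own \<sigma> (h @ [x])"
  have "consistent_fin own \<sigma> h"
    unfolding consistent_fin_def
  proof (intro allI impI)
    fix i assume "Suc i < length h" "own (h ! i)"
    then show "h ! Suc i = \<sigma> (take (Suc i) h)"
      using a[unfolded consistent_fin_def, rule_format, of i] by (simp add: nth_append)
  qed
  moreover have "x = \<sigma> h" if "h \<noteq> []" "own (last h)"
  proof -
    have "Suc (length h - 1) < length (h @ [x])" "own ((h @ [x]) ! (length h - 1))"
      using that by (simp_all add: nth_append last_conv_nth)
    from a[unfolded consistent_fin_def, rule_format, OF this] that show "x = \<sigma> h"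
      by (simp add: nth_append)
  qed
  ultimately show "consistent_fin own \<sigma> h \<and> (h \<noteq> [] \<longrightarrow> own (last h) \<longrightarrow> x = \<sigma> h)"
    by blast
next
  assume a: "consistent_fin own \<sigma> h \<and> (h \<noteq> [] \<longrightarrow> own (last h) \<longrightarrow> x = \<sigma> h)"
  show "consistent_fin own \<sigma> (h @ [x])"
    unfolding consistent_fin_def
  proof (intro allI impI)
    fix i assume i: "Suc i < length (h @ [x])" and o: "own ((h @ [x]) ! i)"
    show "(h @ [x]) ! Suc i = \<sigma> (take (Suc i) (h @ [x]))"
    proof (cases "Suc i < length h")
      case True
      then show ?thesis
        using a o unfolding consistent_fin_def by (simp add: nth_append)
    next
      case False
      then have "Suc i = length h" "h \<noteq> []"
        using i by auto
      moreover have "own (last h)"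
      proof -
        have "i = length h - 1"
          using \<open>Suc i = length h\<close> by simp
        then show ?thesis
          using o \<open>h \<noteq> []\<close> by (simp add: nth_append last_conv_nth)
      qed
      ultimately show ?thesis
        using a by (simp add: nth_append)
    qed
  qed
qed

lemma positional_history_in_region:
  assumes f: "confining own mv True {} X f" and "q \<in> X"
    and "h \<noteq> []" "hd h = q" "path_ok mv h" "consistent_fin own (\<lambda>h. f (last h)) h"
  shows "set h \<subseteq> X"
  using assms(3-)
proof (induction h rule: rev_induct)
  case (snoc x h)
  show ?case
  proof (cases "h = []")
    case True
    then show ?thesis
      using snoc \<open>q \<in> X\<close> by simp
  next
    case False
    then have "path_ok mv h" "x \<in> mv (last h)"
      "consistent_fin own (\<lambda>h. f (last h)) h" "own (last h) \<longrightarrow> x = f (last h)"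
      using snoc.prems by (simp_all add: path_ok_snoc consistent_fin_snoc)
    moreover from this snoc False have "set h \<subseteq> X"
      by simp
    then have "last h \<in> X"
      using False by auto
    ultimately have "x \<in> X"
      using f unfolding confining_def by (cases "own (last h)") auto
    with \<open>set h \<subseteq> X\<close> show ?thesis
      by simp
  qed
qed simp

lemma positional_win_imp_E_wins:
  assumes "positional_win own mv pr True f q"
    and W: "\<And>\<pi>. \<pi> 0 = q \<Longrightarrow> (\<forall>i. \<pi> (Suc i) \<in> mv (\<pi> i)) \<Longrightarrow> parity_wins pr True \<pi> \<Longrightarrow> W \<pi>"
  shows "E_wins own mv W q"
proof -
  obtain X where "q \<in> X" and f: "confining own mv True {} X f"
    and f_wins: "\<And>\<pi>. conforming_play own mv True f X \<pi> \<Longrightarrow> parity_wins pr True \<pi>"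
    using assms(1) unfolding positional_win_def by blast
  define \<sigma> where "\<sigma> h = f (last h)" for h :: "'a list"
  have "(own (last h) \<and> mv (last h) \<noteq> {} \<longrightarrow> \<sigma> h \<in> mv (last h)) \<and>
        (mv (last h) = {} \<longrightarrow> \<not> own (last h))"
    if "h \<noteq> []" "hd h = q" "path_ok mv h" "consistent_fin own \<sigma> h" for h
  proof -
    have "last h \<in> X"
      using positional_history_in_region[OF f \<open>q \<in> X\<close>] that unfolding \<sigma>_def by fastforce
    then show ?thesis
      using f unfolding confining_def \<sigma>_def by auto
  qed
  moreover have "W \<pi>" if "\<pi> 0 = q" and moves: "\<forall>i. \<pi> (Suc i) \<in> mv (\<pi> i)"
    and "consistent_inf own \<sigma> \<pi>" for \<pi>
  proof -
    have follows: "own (\<pi> i) \<Longrightarrow> \<pi> (Suc i) = f (\<pi> i)" for i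
      using \<open>consistent_inf own \<sigma> \<pi>\<close> unfolding consistent_inf_def \<sigma>_def by simp
    have "\<pi> n \<in> X" for n
    proof (induction n)
      case (Suc n)
      then show ?case
        using f follows[of n] moves unfolding confining_def by (cases "own (\<pi> n)") auto
    qed (simp add: \<open>\<pi> 0 = q\<close> \<open>q \<in> X\<close>)
    then have "conforming_play own mv True f X \<pi>"
      unfolding conforming_play_def using moves follows by simp
    then show "W \<pi>"
      using W \<open>\<pi> 0 = q\<close> moves f_wins by blast
  qed
  ultimately have "E_winning_strategy own mv W \<sigma> q"
    unfolding E_winning_strategy_def by blast
  then show ?thesis
    unfolding E_wins_def by blast
qed

lemma nth_history_chain:
  assumes ext: "\<And>n. \<exists>xs. H (Suc n) = H n @ xs" and len: "\<And>n. n < length (H n)"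
    and "i < length (H n)"
  shows "H n ! i = H i ! i"
proof -
  have prefix: "H (m + k) ! i = H m ! i" if "i < length (H m)" for m k
  proof (induction k)
    case (Suc k)
    obtain xs where "H (Suc (m + k)) = H (m + k) @ xs"
      using ext by blast
    moreover have "length (H m) \<le> length (H (m + k))"
    proof (induction k)
      case (Suc k)
      then show ?case
        using ext[of "m + k"] by auto
    qed simp
    ultimately show ?case
      using Suc that by (simp add: nth_append)
  qed simp
  show ?thesis
  proof (cases "i \<le> n")
    case True
    then show ?thesis
      using prefix[of i "n - i"] len[of i] by simp
  next
    case False
    then show ?thesis
      using prefix[of n "i - n"] assms(3) by simp
  qed
qed

lemma play_of_history_chain:
  assumes ext: "\<And>n. \<exists>xs. H (Suc n) = H n @ xs" and len: "\<And>n. n < length (H n)"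
    and path: "\<And>n. path_ok mv (H n)" and consistent: "\<And>n. consistent_fin own \<sigma> (H n)"
  defines "\<pi> \<equiv> \<lambda>i. H i ! i"
  shows "\<pi> 0 = hd (H 0)" and "\<pi> (Suc i) \<in> mv (\<pi> i)" and "consistent_inf own \<sigma> \<pi>"
proof -
  have nth: "H n ! i = \<pi> i" if "i < length (H n)" for n i
    unfolding \<pi>_def using nth_history_chain[OF ext len that] .
  show "\<pi> 0 = hd (H 0)"
    using nth[of 0 0] len[of 0] by (simp add: hd_conv_nth)
  have len_Suc: "Suc i < length (H (Suc i))" for i
    using len[of "Suc i"] .
  show "\<pi> (Suc i) \<in> mv (\<pi> i)"
    using path[of "Suc i", unfolded path_ok_def, rule_format, OF len_Suc[of i]]
      nth[of i "Suc i"] nth[of "Suc i" "Suc i"] len_Suc[of i] by simp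
  have "take (Suc i) (H (Suc i)) = map \<pi> [0..<Suc i]" for i
    using len_Suc[of i] nth[of _ "Suc i"] by (intro nth_equalityI) (auto simp del: upt_Suc)
  moreover have "own (\<pi> i) \<Longrightarrow> \<pi> (Suc i) = \<sigma> (take (Suc i) (H (Suc i)))" for i
    using consistent[of "Suc i", unfolded consistent_fin_def, rule_format, OF len_Suc[of i]]
      nth[of i "Suc i"] nth[of "Suc i" "Suc i"] len_Suc[of i] by simp
  ultimately show "consistent_inf own \<sigma> \<pi>"
    unfolding consistent_inf_def by simp
qed

definition play_history :: "('q \<Rightarrow> bool) \<Rightarrow> ('q list \<Rightarrow> 'q) \<Rightarrow> ('q \<Rightarrow> 'q) \<Rightarrow> 'q \<Rightarrow> nat \<Rightarrow> 'q list" where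
  "play_history own \<sigma> g q = rec_nat [q] (\<lambda>_ h. h @ [if own (last h) then \<sigma> h else g (last h)])"

lemma play_history_0: "play_history own \<sigma> g q 0 = [q]"
  and play_history_Suc: "play_history own \<sigma> g q (Suc n) =
    play_history own \<sigma> g q n @ [if own (last (play_history own \<sigma> g q n)) then \<sigma> (play_history own \<sigma> g q n)
                                else g (last (play_history own \<sigma> g q n))]"
  unfolding play_history_def by simp_all

lemma length_play_history: "length (play_history own \<sigma> g q n) = Suc n"
  by (induction n) (simp_all add: play_history_0 play_history_Suc)

lemma hd_play_history: "hd (play_history own \<sigma> g q n) = q"
proof (induction n)
  case (Suc n)
  have "play_history own \<sigma> g q n \<noteq> []"
    using length_play_history[of own \<sigma> g q n] by auto
  with Suc show ?case
    by (simp add: play_history_Suc)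
qed (simp add: play_history_0)

lemma play_history_valid:
  assumes \<sigma>: "E_winning_strategy own mv W \<sigma> q" and g: "confining own mv False {} X g" and "q \<in> X"
  shows "path_ok mv (play_history own \<sigma> g q n) \<and> consistent_fin own \<sigma> (play_history own \<sigma> g q n) \<and>
         last (play_history own \<sigma> g q n) \<in> X"
proof (induction n)
  case 0
  then show ?case
    using \<open>q \<in> X\<close> by (simp add: play_history_0 path_ok_def consistent_fin_def)
next
  case (Suc n)
  let ?h = "play_history own \<sigma> g q n"
  have ne: "?h \<noteq> []"
    using length_play_history[of own \<sigma> g q n] by auto
  let ?x = "if own (last ?h) then \<sigma> ?h else g (last ?h)"
  have "?x \<in> mv (last ?h) \<and> ?x \<in> X"
  proof (cases "own (last ?h)")
    case True
    then have "\<sigma> ?h \<in> mv (last ?h)"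
      using \<sigma> Suc ne hd_play_history[of own \<sigma> g q n] unfolding E_winning_strategy_def by blast
    moreover have "mv (last ?h) \<subseteq> X"
      using g Suc True unfolding confining_def by auto
    ultimately show ?thesis
      using True by auto
  next
    case False
    then show ?thesis
      using g Suc unfolding confining_def by auto
  qed
  then show ?case
    using Suc ne by (simp add: play_history_Suc path_ok_snoc consistent_fin_snoc)
qed

lemma E_wins_excludes_positional_A_win:
  assumes "E_wins own mv W q" and "positional_win own mv pr False g q"
    and W: "\<And>\<pi>. \<pi> 0 = q \<Longrightarrow> (\<forall>i. \<pi> (Suc i) \<in> mv (\<pi> i)) \<Longrightarrow> W \<pi> \<Longrightarrow> parity_wins pr True \<pi>"
  shows False
proof -
  obtain \<sigma> where \<sigma>: "E_winning_strategy own mv W \<sigma> q"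
    using assms(1) unfolding E_wins_def by blast
  obtain X where "q \<in> X" and g: "confining own mv False {} X g"
    and g_wins: "\<And>\<pi>. conforming_play own mv False g X \<pi> \<Longrightarrow> parity_wins pr False \<pi>"
    using assms(2) unfolding positional_win_def by blast
  let ?H = "play_history own \<sigma> g q"
  note valid = play_history_valid[OF \<sigma> g \<open>q \<in> X\<close>]
  have ext: "\<exists>xs. ?H (Suc n) = ?H n @ xs" for n
    unfolding play_history_Suc by blast
  have len: "n < length (?H n)" for n
    by (simp add: length_play_history)
  define \<pi> where "\<pi> i = ?H i ! i" for i
  have last_H: "last (?H n) = \<pi> n" for n
    unfolding \<pi>_def using length_play_history[of own \<sigma> g q n]
    by (simp add: last_conv_nth flip: length_greater_0_conv)
  have play: "\<pi> 0 = q" "\<pi> (Suc i) \<in> mv (\<pi> i)" "consistent_inf own \<sigma> \<pi>" for i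
    using play_of_history_chain[of ?H mv own \<sigma>, OF ext len conjunct1[OF valid]
                                                         conjunct1[OF conjunct2[OF valid]]]
    unfolding \<pi>_def by (auto simp: hd_play_history play_history_0)
  have follows_g: "\<pi> (Suc n) = g (\<pi> n)" if "\<not> own (\<pi> n)" for n
    using that last_H[of n] last_H[of "Suc n"] unfolding play_history_Suc by simp
  have "parity_wins pr True \<pi>"
    using \<sigma> play W unfolding E_winning_strategy_def by blast
  moreover have "conforming_play own mv False g X \<pi>"
    using play follows_g valid last_H unfolding conforming_play_def by auto
  then have "parity_wins pr False \<pi>"
    by (rule g_wins)
  ultimately show False
    unfolding parity_wins_def by simp
qed

definition seg_offset :: "(nat \<Rightarrow> 'a list) \<Rightarrow> nat \<Rightarrow> nat" where
  "seg_offset seg i = (\<Sum>j<i. length (seg j))"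

text \<open>The stream x0, then the elements of seg 0, then those of seg 1, and so on: position
  seg_offset seg i + j + 1 holds seg i ! j.\<close>
definition concat_segs :: "'a \<Rightarrow> (nat \<Rightarrow> 'a list) \<Rightarrow> nat \<Rightarrow> 'a" where
  "concat_segs x0 seg n =
     (if n = 0 then x0
      else let i = LEAST i. n \<le> seg_offset seg (Suc i) in seg i ! (n - 1 - seg_offset seg i))"

lemma seg_offset_Suc: "seg_offset seg (Suc i) = seg_offset seg i + length (seg i)"
  unfolding seg_offset_def by simp

context
  fixes seg :: "nat \<Rightarrow> 'a list"
  assumes nonempty: "\<And>i. seg i \<noteq> []"
begin

lemma seg_offset_mono: "i \<le> i' \<Longrightarrow> seg_offset seg i + (i' - i) \<le> seg_offset seg i'"
proof (induction i' rule: dec_induct)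
  case (step k)
  have "length (seg k) \<ge> 1"
    using nonempty[of k] by (simp add: Suc_le_eq)
  then show ?case
    using step by (simp add: seg_offset_Suc Suc_diff_le)
qed simp

lemma seg_offset_ge: "i \<le> seg_offset seg i"
  using seg_offset_mono[of 0 i] by (simp add: seg_offset_def)

lemma concat_segs_at:
  assumes "j < length (seg i)"
  shows "concat_segs x0 seg (seg_offset seg i + j + 1) = seg i ! j"
proof -
  let ?n = "seg_offset seg i + j + 1"
  have "(LEAST i'. ?n \<le> seg_offset seg (Suc i')) = i"
  proof (rule Least_equality)
    show "?n \<le> seg_offset seg (Suc i)"
      using assms by (simp add: seg_offset_Suc)
    show "i \<le> y" if "?n \<le> seg_offset seg (Suc y)" for y
    proof (rule ccontr)
      assume "\<not> i \<le> y"
      then have "seg_offset seg (Suc y) \<le> seg_offset seg i"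
        using seg_offset_mono[of "Suc y" i] by simp
      with that show False
        by simp
    qed
  qed
  then show ?thesis
    unfolding concat_segs_def by simp
qed

lemma concat_segs_cover: "\<exists>i j. j < length (seg i) \<and> Suc n = seg_offset seg i + j + 1"
proof -
  have ex: "\<exists>i. Suc n \<le> seg_offset seg (Suc i)"
    using seg_offset_ge[of "Suc n"] by (intro exI[of _ "Suc n"]) (simp add: seg_offset_Suc)
  define i where "i = (LEAST i. Suc n \<le> seg_offset seg (Suc i))"
  have "Suc n \<le> seg_offset seg (Suc i)"
    unfolding i_def using LeastI_ex[OF ex] .
  moreover have "seg_offset seg i \<le> n"
  proof (cases i)
    case 0
    then show ?thesis
      by (simp add: seg_offset_def)
  next
    case (Suc i')
    then have "\<not> Suc n \<le> seg_offset seg (Suc i')"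
      using not_less_Least[of i' "\<lambda>i. Suc n \<le> seg_offset seg (Suc i)"] unfolding i_def by simp
    then show ?thesis
      using Suc by simp
  qed
  ultimately show ?thesis
    by (intro exI[of _ i] exI[of _ "n - seg_offset seg i"]) (simp add: seg_offset_Suc)
qed

lemma concat_segs_successively:
  assumes "\<And>i. successively P ((if i = 0 then x0 else last (seg (i - 1))) # seg i)"
  shows "P (concat_segs x0 seg n) (concat_segs x0 seg (Suc n))"
proof -
  obtain i j where ij: "j < length (seg i)" "Suc n = seg_offset seg i + j + 1"
    using concat_segs_cover[of n] by blast
  let ?l = "(if i = 0 then x0 else last (seg (i - 1))) # seg i"
  have "concat_segs x0 seg (Suc n) = ?l ! Suc j"
    using concat_segs_at[OF ij(1)] ij(2) by simp
  moreover have "concat_segs x0 seg n = ?l ! j"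
  proof (cases j)
    case 0
    then have n: "n = seg_offset seg i"
      using ij by simp
    show ?thesis
    proof (cases i)
      case 0
      then show ?thesis
        using n \<open>j = 0\<close> by (simp add: seg_offset_def concat_segs_def)
    next
      case (Suc i')
      have last_idx: "length (seg i') - 1 < length (seg i')"
        using nonempty[of i'] by simp
      have n': "n = seg_offset seg i' + (length (seg i') - 1) + 1"
        using n Suc nonempty[of i'] by (simp add: seg_offset_Suc)
      have "concat_segs x0 seg n = seg i' ! (length (seg i') - 1)"
        unfolding n' using last_idx by (rule concat_segs_at)
      then show ?thesis
        using Suc \<open>j = 0\<close> nonempty[of i'] by (simp add: last_conv_nth)
    qed
  next
    case (Suc j')
    then show ?thesis
      using ij concat_segs_at[of j' i] by simp
  qed
  ultimately show ?thesis
    using assms[of i] ij(1) successively_nth[of P ?l j] by simp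
qed

lemma max_inf_often_concat_segs:
  assumes bounded: "\<And>x. pr x \<le> d"
  shows "max_inf_often (\<lambda>n. pr (concat_segs x0 seg n)) = max_inf_often (\<lambda>i. Max (pr ` set (seg i)))"
proof -
  let ?ks = "\<lambda>i. Max (pr ` set (seg i))"
  let ?K = "max_inf_often ?ks"
  have ks_bounded: "?ks i \<le> d" for i
    using bounded nonempty by (simp add: Max_le_iff)
  show ?thesis
  proof (rule max_inf_often_eqI)
    show "pr (concat_segs x0 seg n) \<le> d" for n
      using bounded .
    show "\<exists>\<^sub>F n in sequentially. pr (concat_segs x0 seg n) = ?K"
      unfolding frequently_sequentially
    proof
      fix m
      obtain i where i: "i \<ge> m" "?ks i = ?K"
        using frequently_max_inf_often[of ?ks d, OF ks_bounded]
        unfolding frequently_sequentially by blast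
      have "?ks i \<in> pr ` set (seg i)"
        using nonempty[of i] by simp
      then obtain j where j: "j < length (seg i)" "pr (seg i ! j) = ?K"
        using i(2) by (auto simp: in_set_conv_nth)
      have "seg_offset seg i + j + 1 \<ge> m"
        using seg_offset_ge[of i] i(1) by simp
      then show "\<exists>n\<ge>m. pr (concat_segs x0 seg n) = ?K"
        using concat_segs_at[OF j(1)] j(2) by metis
    qed
    obtain N where N: "\<And>i. i \<ge> N \<Longrightarrow> ?ks i \<le> ?K"
      using eventually_le_max_inf_often[of ?ks d, OF ks_bounded]
      unfolding eventually_sequentially by blast
    show "\<forall>\<^sub>F n in sequentially. pr (concat_segs x0 seg n) \<le> ?K"
      unfolding eventually_sequentially
    proof (intro exI allI impI)
      fix n assume n: "seg_offset seg N + 1 \<le> n"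
      then have "n = Suc (n - 1)"
        by simp
      then obtain i j where ij: "j < length (seg i)" "n = seg_offset seg i + j + 1"
        using concat_segs_cover[of "n - 1"] by auto
      have "i \<ge> N"
      proof (rule ccontr)
        assume "\<not> N \<le> i"
        then have "seg_offset seg (Suc i) \<le> seg_offset seg N"
          using seg_offset_mono[of "Suc i" N] by simp
        then show False
          using ij n by (simp add: seg_offset_Suc)
      qed
      have "pr (seg i ! j) \<le> ?ks i"
        using ij(1) by simp
      then show "pr (concat_segs x0 seg n) \<le> ?K"
        using concat_segs_at[OF ij(1)] ij(2) N[OF \<open>i \<ge> N\<close>] by simp
    qed
  qed
qed

end

lemma successively_lift:
  assumes chain: "successively Q xs" and "xs \<noteq> []" "A (hd xs)"
    and step: "\<And>a b. Q a b \<Longrightarrow> A a \<Longrightarrow> R a b \<and> A b"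
  shows "successively R xs \<and> (\<forall>y\<in>set xs. A y)"
proof -
  have A: "A (xs ! j)" if "j < length xs" for j
    using that
  proof (induction j)
    case 0
    then show ?case
      using assms(2,3) by (simp add: hd_conv_nth)
  next
    case (Suc j)
    then show ?case
      using step successively_nth[OF chain, of j] by simp
  qed
  have "successively R xs"
    unfolding successively_conv_nth using step successively_nth[OF chain] A by simp
  moreover have "\<forall>y\<in>set xs. A y"
    using A by (auto simp: in_set_conv_nth)
  ultimately show ?thesis
    by blast
qed

lemma successively_tl_property:
  assumes chain: "successively P xs" and "y \<in> set (tl xs)" and step: "\<And>a b. P a b \<Longrightarrow> Q b"
  shows "Q y"
proof -
  obtain j where "Suc j < length xs" "y = xs ! Suc j"
    using assms(2) by (cases xs) (auto simp: in_set_conv_nth)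
  then show ?thesis
    using step successively_nth[OF chain] by blast
qed

lemma Max_image_snoc: "xs \<noteq> [] \<Longrightarrow> Max (f ` set (xs @ [x])) = max (Max (f ` set xs)) (f x)"
  by (simp add: Max_insert max.commute)

section \<open>The evaluation game of an epsilon-free parity formula\<close>

lemma mem_mcomp_iff:
  "(v, k, w) \<in> m ;; e \<longleftrightarrow> (\<exists>k' y k''. (v, k', y) \<in> m \<and> (y, k'', w) \<in> e \<and> k = max k' k'')"
  unfolding mcomp_def by blast

lemma mem_Ran_m_iff: "w \<in> Ran_m m \<longleftrightarrow> (\<exists>u k. (u, k, w) \<in> m)"
  unfolding Ran_m_def by blast

lemma mem_Delta_iff: "(v, k, w) \<in> Delta U \<longleftrightarrow> v = w \<and> k = 0 \<and> v \<in> U"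
  unfolding Delta_def by blast

lemma mem_e_minus_iff:
  "(v, k, w) \<in> e_minus G \<chi> \<longleftrightarrow>
     (\<exists>\<pi>. v \<in> Vlab G LOr \<union> Vlab G LAnd \<and> \<pi> \<in> SP G \<chi> v \<and> k = Om_path G \<pi> \<and> w = last \<pi>)"
  unfolding e_minus_def by blast

definition chi_step :: "('v, 'p) pformula \<Rightarrow> ('v \<Rightarrow> 'v) \<Rightarrow> 'v \<Rightarrow> 'v \<Rightarrow> bool" where
  "chi_step G \<chi> a b \<longleftrightarrow> a \<in> Vlab G LOr \<union> Vlab G LAnd \<and> b \<in> succs G a \<and> (a \<in> Vlab G LOr \<longrightarrow> b = \<chi> a)"

locale eps_free_parity_formula =
  fixes G :: "('v, 'p) pformula"
  assumes parity_formula: "parity_formula G"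
    and no_eps: "\<forall>v \<in> pV G. pL G v \<noteq> LEps"
    and and_or_succs: "\<forall>v \<in> pV G. pL G v \<in> {LAnd, LOr} \<longrightarrow> succs G v \<noteq> {}"
begin

lemma finite_pV: "finite (pV G)" and init_in_pV: "pvI G \<in> pV G"
  and edges_in_pV: "pE G \<subseteq> pV G \<times> pV G"
  using parity_formula unfolding parity_formula_def by auto

lemma succs_in_pV: "u \<in> succs G v \<Longrightarrow> u \<in> pV G \<and> v \<in> pV G"
  using edges_in_pV unfolding succs_def by auto

lemma modal_succ_unique:
  "v \<in> pV G \<Longrightarrow> pL G v \<in> {LDia, LBox} \<Longrightarrow> u \<in> succs G v \<Longrightarrow> u' \<in> succs G v \<Longrightarrow> u = u'"
  using parity_formula unfolding parity_formula_def by blast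

lemma modal_succ_exists: "v \<in> pV G \<Longrightarrow> pL G v \<in> {LDia, LBox} \<Longrightarrow> \<exists>u. u \<in> succs G v"
  using parity_formula unfolding parity_formula_def by blast

lemma eval_moves_in_pV: "fst q \<in> pV G \<Longrightarrow> q' \<in> eval_moves G R q \<Longrightarrow> fst q' \<in> pV G"
  using edges_in_pV by (cases q; cases "pL G (fst q)") auto

text \<open>Priorities of the evaluation game; positions outside the formula get the junk priority 0,
  which keeps the priority function bounded.\<close>
definition pos_pr :: "'v \<times> 's \<Rightarrow> nat" where
  "pos_pr q = (if fst q \<in> pV G then pOm G (fst q) else 0)"

definition max_prio :: nat where
  "max_prio = Max (pOm G ` pV G)"

lemma pOm_le_max_prio: "v \<in> pV G \<Longrightarrow> pOm G v \<le> max_prio"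
  unfolding max_prio_def using finite_pV by auto

lemma pos_pr_le: "pos_pr q \<le> max_prio"
  unfolding pos_pr_def using pOm_le_max_prio by auto

definition conforming_step ::
  "'s rel \<Rightarrow> ('s \<Rightarrow> 'p set) \<Rightarrow> bool \<Rightarrow> ('v \<times> 's \<Rightarrow> 'v \<times> 's) \<Rightarrow> ('v \<times> 's) set \<Rightarrow>
   'v \<times> 's \<Rightarrow> 'v \<times> 's \<Rightarrow> bool" where
  "conforming_step R Val p f X a b \<longleftrightarrow>
     b \<in> eval_moves G R a \<and> (eval_owner G Val a = p \<longrightarrow> b = f a) \<and> a \<in> X \<and> b \<in> X \<and>
     fst a \<in> pV G \<and> fst b \<in> pV G"

lemma conforming_steps_in_pV:
  assumes "successively (conforming_step R Val p f X) (x # xs)" "y \<in> set xs"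
  shows "fst y \<in> pV G"
  using successively_tl_property[OF assms(1), of y "\<lambda>q. fst q \<in> pV G"] assms(2)
  unfolding conforming_step_def by auto

text \<open>Gluing the finite pieces of a trace into one play of the evaluation game transfers the
  parity condition from plays to the maxima of the pieces.\<close>
lemma trace_parity:
  assumes wins: "\<And>\<pi>. conforming_play (eval_owner G Val) (eval_moves G R) p f X \<pi> \<Longrightarrow>
                      parity_wins pos_pr p \<pi>"
    and nonempty: "\<And>i. seg i \<noteq> []"
    and chain: "\<And>i. successively (conforming_step R Val p f X)
                      ((if i = 0 then x0 else last (seg (i - 1))) # seg i)"
    and ks: "\<And>i. ks (Suc i) = Max (pOm G ` fst ` set (seg i))"
  shows "even (max_inf_often ks) = p"
proof -
  define \<rho> where "\<rho> = concat_segs x0 seg"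
  have seg_in_pV: "fst ` set (seg i) \<subseteq> pV G" for i
    using conforming_steps_in_pV[OF chain[of i]] by blast
  have "conforming_step R Val p f X (\<rho> n) (\<rho> (Suc n))" for n
    unfolding \<rho>_def using nonempty chain by (rule concat_segs_successively)
  then have "conforming_play (eval_owner G Val) (eval_moves G R) p f X \<rho>"
    unfolding conforming_step_def conforming_play_def by auto
  then have "even (max_inf_often (\<lambda>n. pos_pr (\<rho> n))) = p"
    using wins unfolding parity_wins_def by blast
  moreover have "max_inf_often (\<lambda>n. pos_pr (\<rho> n)) = max_inf_often (\<lambda>i. Max (pos_pr ` set (seg i)))"
    unfolding \<rho>_def using nonempty pos_pr_le by (rule max_inf_often_concat_segs)
  moreover have "pos_pr ` set (seg i) = pOm G ` fst ` set (seg i)" for i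
    using seg_in_pV[of i] unfolding pos_pr_def by force
  moreover have "max_inf_often (\<lambda>i. ks (i + 1)) = max_inf_often ks"
  proof (rule max_inf_often_shift)
    have "ks (Suc i) \<le> max_prio" for i
      using seg_in_pV[of i] nonempty[of i] pOm_le_max_prio finite_pV unfolding ks
      by (subst Max_le_iff) auto
    then show "ks i \<le> max max_prio (ks 0)" for i
      by (cases i) (auto simp: le_max_iff_disj)
  qed
  ultimately show ?thesis
    using ks by simp
qed

lemma SP_paths:
  assumes "local_strategy G \<chi>" and "\<pi> \<in> SP G \<chi> v"
  shows "2 \<le> length \<pi> \<and> hd \<pi> = v \<and> set \<pi> \<subseteq> pV G \<and> successively (chi_step G \<chi>) \<pi>"
  using assms(2)
proof (induction rule: SP.induct)
  case sp_or
  then have "\<chi> v \<in> succs G v"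
    using assms(1) unfolding local_strategy_def by blast
  then show ?case
    using sp_or succs_in_pV[of "\<chi> v" v] by (auto simp: chi_step_def Vlab_def)
next
  case (sp_and w)
  then show ?case
    using succs_in_pV[of w v] by (auto simp: chi_step_def Vlab_def)
next
  case (sp_or_step \<pi>)
  then have "\<chi> (last \<pi>) \<in> succs G (last \<pi>)"
    using assms(1) unfolding local_strategy_def by blast
  with sp_or_step show ?case
    using succs_in_pV[of "\<chi> (last \<pi>)" "last \<pi>"]
    by (auto simp: successively_append_iff chi_step_def hd_append)
next
  case (sp_and_step \<pi> w)
  then show ?case
    using succs_in_pV[of w "last \<pi>"]
    by (auto simp: successively_append_iff chi_step_def hd_append Vlab_def)
qed

lemma Om_path_in_priorities:
  assumes "local_strategy G \<chi>" "\<pi> \<in> SP G \<chi> v"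
  shows "Om_path G \<pi> \<in> pOm G ` pV G"
proof -
  have "2 \<le> length \<pi>" "set \<pi> \<subseteq> pV G"
    using SP_paths[OF assms] by auto
  moreover have "set (tl \<pi>) \<subseteq> set \<pi>"
    by (cases \<pi>) auto
  moreover have "tl \<pi> \<noteq> []"
  proof
    assume "tl \<pi> = []"
    then have "length (tl \<pi>) = 0"
      by (simp only: list.size(3))
    with \<open>2 \<le> length \<pi>\<close> show False
      by simp
  qed
  ultimately have "set (tl \<pi>) \<noteq> {}" "set (tl \<pi>) \<subseteq> pV G"
    by auto
  then show ?thesis
    unfolding Om_path_def using Max_in[of "pOm G ` set (tl \<pi>)"] by blast
qed

lemma e_chi_range:
  assumes "local_strategy G \<chi>" "(v, k, w) \<in> e_chi G \<chi>"
  shows "v \<in> pV G \<and> w \<in> pV G \<and> (k = 0 \<or> k \<in> pOm G ` pV G)"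
  using assms(2) unfolding e_chi_def
proof
  assume "(v, k, w) \<in> e_minus G \<chi>"
  then obtain \<pi> where \<pi>: "v \<in> Vlab G LOr \<union> Vlab G LAnd" "\<pi> \<in> SP G \<chi> v" "k = Om_path G \<pi>" "w = last \<pi>"
    unfolding mem_e_minus_iff by blast
  have "2 \<le> length \<pi>" "set \<pi> \<subseteq> pV G"
    using SP_paths[OF assms(1) \<pi>(2)] by auto
  then have "w \<in> pV G"
    using \<pi>(4) by (cases \<pi> rule: rev_cases) auto
  then show ?thesis
    using \<pi> Om_path_in_priorities[OF assms(1) \<pi>(2)] by (auto simp: Vlab_def)
qed (auto simp: mem_Delta_iff)

lemma e_chi_mcomp_macrostate:
  assumes "local_strategy G \<chi>" "d \<subseteq> pV G \<times> pOm G ` pV G \<times> pV G"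
  shows "e_chi G \<chi> ;; d \<in> macrostates G"
  unfolding macrostates_def
proof (intro PowI subsetI)
  fix z assume "z \<in> e_chi G \<chi> ;; d"
  then obtain v k w k' y k'' where z: "z = (v, k, w)" "(v, k', y) \<in> e_chi G \<chi>" "(y, k'', w) \<in> d"
    "k = max k' k''"
    by (cases z) (auto simp: mem_mcomp_iff)
  have "v \<in> pV G" "k' = 0 \<or> k' \<in> pOm G ` pV G"
    using e_chi_range[OF assms(1) z(2)] by auto
  moreover have "w \<in> pV G" "k'' \<in> pOm G ` pV G"
    using z(3) assms(2) by auto
  moreover have "k \<in> {k', k''}"
    using z(4) by (auto simp: max_def)
  ultimately show "z \<in> pV G \<times> pOm G ` pV G \<times> pV G"
    using z(1,4) by auto
qed

lemma d_box_range: "d_box G m \<subseteq> pV G \<times> pOm G ` pV G \<times> pV G"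
  unfolding d_box_def Vlab_def using succs_in_pV by blast

lemma d_dia_range: "x \<in> pV G \<Longrightarrow> d_dia G x m \<subseteq> pV G \<times> pOm G ` pV G \<times> pV G"
  unfolding d_dia_def using d_box_range succs_in_pV by blast

end

section \<open>From the evaluation game to the acceptance game\<close>

locale E_positional_win = eps_free_parity_formula G for G :: "('v, 'p) pformula" +
  fixes R :: "'s rel" and Val :: "'s \<Rightarrow> 'p set"
    and f :: "'v \<times> 's \<Rightarrow> 'v \<times> 's" and X :: "('v \<times> 's) set" and s0 :: 's
  assumes f_confining: "confining (eval_owner G Val) (eval_moves G R) True {} X f"
    and f_wins: "\<And>\<pi>. conforming_play (eval_owner G Val) (eval_moves G R) True f X \<pi> \<Longrightarrow>
                      parity_wins pos_pr True \<pi>"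
    and init_in_X: "(pvI G, s0) \<in> X"
begin

abbreviation f_step :: "'v \<times> 's \<Rightarrow> 'v \<times> 's \<Rightarrow> bool" where
  "f_step \<equiv> conforming_step R Val True f X"

lemma f_moves:
  assumes "q \<in> X"
  shows "eval_owner G Val q \<Longrightarrow> f q \<in> eval_moves G R q \<and> f q \<in> X"
    and "\<not> eval_owner G Val q \<Longrightarrow> eval_moves G R q \<subseteq> X"
  using f_confining assms unfolding confining_def by auto

text \<open>Outside X the choice is irrelevant; any successor serves.\<close>
definition chi_at :: "'s \<Rightarrow> 'v \<Rightarrow> 'v" where
  "chi_at s v = (if (v, s) \<in> X then fst (f (v, s)) else (SOME u. u \<in> succs G v))"

lemma chi_at_or:
  assumes "v \<in> Vlab G LOr" "(v, s) \<in> X"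
  shows "f (v, s) = (chi_at s v, s) \<and> chi_at s v \<in> succs G v \<and> (chi_at s v, s) \<in> X"
proof -
  have or: "pL G v = LOr"
    using assms(1) by (simp add: Vlab_def)
  then have "f (v, s) \<in> eval_moves G R (v, s) \<and> f (v, s) \<in> X"
    using f_moves(1)[OF assms(2)] by simp
  then obtain u where "f (v, s) = (u, s)" "(v, u) \<in> pE G" "(u, s) \<in> X"
    using or by auto
  then show ?thesis
    using assms(2) unfolding chi_at_def by (simp add: succs_def)
qed

lemma local_strategy_chi_at: "local_strategy G (chi_at s)"
  unfolding local_strategy_def
proof
  fix v assume v: "v \<in> Vlab G LOr"
  show "chi_at s v \<in> succs G v"
  proof (cases "(v, s) \<in> X")
    case True
    then show ?thesis
      using chi_at_or[OF v] by blast
  next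
    case False
    have "succs G v \<noteq> {}"
      using v and_or_succs by (auto simp: Vlab_def)
    then have "(SOME u. u \<in> succs G v) \<in> succs G v"
      by (meson ex_in_conv someI_ex)
    then show ?thesis
      using False unfolding chi_at_def by simp
  qed
qed

lemma chi_step_conforming:
  assumes "chi_step G (chi_at s) a b" "(a, s) \<in> X"
  shows "f_step (a, s) (b, s) \<and> (b, s) \<in> X"
proof -
  have ab: "a \<in> Vlab G LOr \<union> Vlab G LAnd" "b \<in> succs G a" "a \<in> Vlab G LOr \<longrightarrow> b = chi_at s a"
    using assms(1) unfolding chi_step_def by auto
  have in_pV: "a \<in> pV G" "b \<in> pV G"
    using ab(2) succs_in_pV by auto
  have move: "(b, s) \<in> eval_moves G R (a, s)"
    using ab(1,2) by (auto simp: succs_def Vlab_def)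
  show ?thesis
  proof (cases "a \<in> Vlab G LOr")
    case True
    then have "f (a, s) = (b, s)" "(b, s) \<in> X"
      using chi_at_or[OF True assms(2)] ab(3) by auto
    then show ?thesis
      unfolding conforming_step_def using move in_pV assms(2) by simp
  next
    case False
    then have "\<not> eval_owner G Val (a, s)"
      using ab(1) by (auto simp: Vlab_def)
    then show ?thesis
      unfolding conforming_step_def using f_moves(2)[OF assms(2)] move in_pV assms(2) by auto
  qed
qed

lemma SP_conforming:
  assumes "(v, s) \<in> X" "\<pi> \<in> SP G (chi_at s) v"
  shows "successively f_step (map (\<lambda>y. (y, s)) \<pi>) \<and> (\<forall>y\<in>set \<pi>. (y, s) \<in> X)"
proof -
  have \<pi>: "2 \<le> length \<pi>" "hd \<pi> = v" "successively (chi_step G (chi_at s)) \<pi>"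
    using SP_paths[OF local_strategy_chi_at assms(2)] by auto
  have "successively (\<lambda>a b. f_step (a, s) (b, s)) \<pi> \<and> (\<forall>y\<in>set \<pi>. (y, s) \<in> X)"
  proof (rule successively_lift[where A="\<lambda>y. (y, s) \<in> X"])
    show "\<pi> \<noteq> []" "(hd \<pi>, s) \<in> X"
      using \<pi> assms(1) by auto
    show "f_step (a, s) (b, s) \<and> (b, s) \<in> X" if "chi_step G (chi_at s) a b" "(a, s) \<in> X" for a b
      using that by (rule chi_step_conforming)
  qed (rule \<pi>(3))
  then show ?thesis
    by (simp add: successively_map)
qed

lemma e_chi_reach:
  assumes "(v, s) \<in> X" "(v, k, w) \<in> e_chi G (chi_at s)"
  shows "(w, s) \<in> X \<and> w \<in> pV G"
proof -
  have "w \<in> pV G"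
    using e_chi_range[OF local_strategy_chi_at assms(2)] by blast
  moreover have "(w, s) \<in> X"
    using assms(2) unfolding e_chi_def
  proof
    assume "(v, k, w) \<in> e_minus G (chi_at s)"
    then obtain \<pi> where "\<pi> \<in> SP G (chi_at s) v" "w = last \<pi>"
      unfolding mem_e_minus_iff by blast
    moreover have "\<pi> \<noteq> []"
      using SP_paths[OF local_strategy_chi_at \<open>\<pi> \<in> SP G (chi_at s) v\<close>] by auto
    ultimately show ?thesis
      using SP_conforming[OF assms(1)] by simp
  qed (use assms(1) in \<open>simp add: mem_Delta_iff\<close>)
  ultimately show ?thesis
    by blast
qed

definition safe :: "'v macro \<Rightarrow> 's \<Rightarrow> bool" where
  "safe m s \<longleftrightarrow> (\<forall>v\<in>Ran_m m. (v, s) \<in> X \<and> v \<in> pV G)"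

lemma safe_Ran_mcomp:
  assumes "safe m s" "w \<in> Ran_m (m ;; e_chi G (chi_at s))"
  shows "(w, s) \<in> X \<and> w \<in> pV G"
proof -
  obtain u k v k' where "(u, k, v) \<in> m" "(v, k', w) \<in> e_chi G (chi_at s)"
    using assms(2) unfolding mem_Ran_m_iff mem_mcomp_iff by blast
  moreover from this have "v \<in> Ran_m m"
    unfolding mem_Ran_m_iff by blast
  ultimately show ?thesis
    using assms(1) e_chi_reach unfolding safe_def by blast
qed

lemma compatible_chi_at:
  assumes "safe m s"
  shows "compatible G (Ran_m (m ;; e_chi G (chi_at s))) (Val s)"
  unfolding compatible_def
proof
  fix u assume "u \<in> Ran_m (m ;; e_chi G (chi_at s))"
  then have "(u, s) \<in> X"
    using safe_Ran_mcomp[OF assms] by blast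
  then have not_stuck: "\<not> (eval_owner G Val (u, s) \<and> eval_moves G R (u, s) = {})"
    using f_moves(1) by blast
  then show "pL G u \<noteq> LBot \<and> (\<forall>p. pL G u = LLit p \<longrightarrow> p \<in> Val s) \<and>
             (\<forall>p. pL G u = LNLit p \<longrightarrow> p \<notin> Val s)"
    by auto
qed

lemma NBT_chi_at:
  assumes "safe m s"
  shows "NBT (\<lambda>i. if i = 0 then m else e_minus G (chi_at s))"
  unfolding NBT_def
proof
  assume "\<exists>vs ks. bad_trace (\<lambda>i. if i = 0 then m else e_minus G (chi_at s)) vs ks"
  then obtain vs ks where trace: "\<And>i. (vs i, ks i, vs (Suc i)) \<in> (if i = 0 then m else e_minus G (chi_at s))"
    and odd: "odd (max_inf_often ks)"
    unfolding bad_trace_def max_inf_often_def by blast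
  have "\<exists>\<pi>. \<pi> \<in> SP G (chi_at s) (vs i) \<and> ks i = Om_path G \<pi> \<and> vs (Suc i) = last \<pi>" if "i \<ge> 1" for i
    using trace[of i] that by (auto simp: mem_e_minus_iff)
  then obtain P where P: "\<And>i. i \<ge> 1 \<Longrightarrow>
      P i \<in> SP G (chi_at s) (vs i) \<and> ks i = Om_path G (P i) \<and> vs (Suc i) = last (P i)"
    by metis
  have P_shape: "2 \<le> length (P i) \<and> hd (P i) = vs i" if "i \<ge> 1" for i
    using SP_paths[OF local_strategy_chi_at] P[OF that] by blast
  have reach: "(vs i, s) \<in> X" if "i \<ge> 1" for i
    using that
  proof (induction i rule: dec_induct)
    case base
    have "vs 1 \<in> Ran_m m"
      using trace[of 0] unfolding mem_Ran_m_iff by auto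
    then show ?case
      using assms unfolding safe_def by blast
  next
    case (step i)
    have "P i \<noteq> []"
      using P_shape[OF step.hyps(1)] by auto
    then have "last (P i) \<in> set (P i)"
      by simp
    then show ?case
      using SP_conforming[OF step.IH] P[OF step.hyps(1)] by auto
  qed
  define seg where "seg i = map (\<lambda>y. (y, s)) (tl (P (Suc i)))" for i
  have tl_ne: "tl (P (Suc i)) \<noteq> []" for i
    using P_shape[of "Suc i"] by (cases "P (Suc i)") auto
  have start: "(if i = 0 then (vs 1, s) else last (seg (i - 1))) = (vs (Suc i), s)" for i
  proof (cases i)
    case (Suc j)
    have "last (tl (P (Suc j))) = last (P (Suc j))"
      using tl_ne[of j] by (cases "P (Suc j)") auto
    then show ?thesis
      using Suc P[of "Suc j"] tl_ne[of j] unfolding seg_def by (simp add: last_map)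
  qed simp
  have "(vs (Suc i), s) # seg i = map (\<lambda>y. (y, s)) (P (Suc i))" for i
    unfolding seg_def using P_shape[of "Suc i"] by (cases "P (Suc i)") auto
  then have chain: "successively f_step ((if i = 0 then (vs 1, s) else last (seg (i - 1))) # seg i)" for i
    unfolding start using SP_conforming[OF reach P[THEN conjunct1]] by simp
  have "ks (Suc i) = Max (pOm G ` fst ` set (seg i))" for i
    using P[of "Suc i"] unfolding seg_def Om_path_def by (simp add: image_image)
  then have "even (max_inf_often ks)"
    using trace_parity[OF f_wins _ chain] tl_ne unfolding seg_def by simp
  with odd show False
    by simp
qed

text \<open>The marking chosen at (m, s): every successor of s carries the box demands, and the
  successor that f picks at a diamond vertex x carries the demand of x as well.\<close>
definition marking :: "'v macro \<Rightarrow> 's \<Rightarrow> 'v macro \<Rightarrow> 's set" where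
  "marking m s b = {t. (s, t) \<in> R \<and>
     (b = e_chi G (chi_at s) ;; d_box G (m ;; e_chi G (chi_at s)) \<or>
      (\<exists>x\<in>Ran_m (m ;; e_chi G (chi_at s)) \<inter> Vlab G LDia.
         b = e_chi G (chi_at s) ;; d_dia G x (m ;; e_chi G (chi_at s)) \<and> t = snd (f (x, s))))}"

lemma dia_move:
  assumes "x \<in> Vlab G LDia" "(x, s) \<in> X"
  shows "\<exists>u. f (x, s) = (u, snd (f (x, s))) \<and> u \<in> succs G x \<and> (s, snd (f (x, s))) \<in> R \<and>
             f (x, s) \<in> X"
proof -
  have "pL G x = LDia"
    using assms(1) by (simp add: Vlab_def)
  moreover have "f (x, s) \<in> eval_moves G R (x, s) \<and> f (x, s) \<in> X"
    using f_moves(1)[OF assms(2)] calculation by simp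
  ultimately show ?thesis
    by (auto simp: succs_def)
qed

lemma box_demand_step:
  assumes "safe m s" "(s, t) \<in> R" "(y, k, w) \<in> d_box G (m ;; e_chi G (chi_at s))"
  shows "k = pOm G w \<and> f_step (y, s) (w, t)"
proof -
  have y: "y \<in> Ran_m (m ;; e_chi G (chi_at s))" "pL G y = LBox" "w \<in> succs G y" "k = pOm G w"
    using assms(3) unfolding d_box_def Vlab_def by auto
  have y_safe: "(y, s) \<in> X" "y \<in> pV G"
    using safe_Ran_mcomp[OF assms(1) y(1)] by auto
  have move: "(w, t) \<in> eval_moves G R (y, s)"
    using y(2,3) assms(2) by (simp add: succs_def)
  have not_owner: "\<not> eval_owner G Val (y, s)"
    using y(2) by simp
  have "(w, t) \<in> X"
    using f_moves(2)[OF y_safe(1) not_owner] move by blast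
  then show ?thesis
    unfolding conforming_step_def using move not_owner y_safe y(4) succs_in_pV[OF y(3)] by simp
qed

lemma dia_demand_step:
  assumes "safe m s" "x \<in> Ran_m (m ;; e_chi G (chi_at s)) \<inter> Vlab G LDia" "w \<in> succs G x"
  shows "(s, snd (f (x, s))) \<in> R \<and> f_step (x, s) (w, snd (f (x, s)))"
proof -
  have x_safe: "(x, s) \<in> X" "x \<in> pV G"
    using safe_Ran_mcomp[OF assms(1)] assms(2) by auto
  obtain u where u: "f (x, s) = (u, snd (f (x, s)))" "u \<in> succs G x" "(s, snd (f (x, s))) \<in> R"
    "f (x, s) \<in> X"
    using dia_move[OF _ x_safe(1)] assms(2) by blast
  have x_dia: "pL G x = LDia"
    using assms(2) by (simp add: Vlab_def)
  have "w = u"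
    using modal_succ_unique[OF x_safe(2), of w u] x_dia assms(3) u(2) by simp
  moreover have "(u, snd (f (x, s))) \<in> eval_moves G R (x, s)"
    using x_dia u(2,3) by (simp add: succs_def)
  ultimately show ?thesis
    unfolding conforming_step_def using x_dia u x_safe succs_in_pV[OF u(2)] by auto
qed

lemma marking_demands:
  assumes "safe m s" "t \<in> marking m s b"
  shows "\<exists>d. b = e_chi G (chi_at s) ;; d \<and>
             (\<forall>y k w. (y, k, w) \<in> d \<longrightarrow> k = pOm G w \<and> f_step (y, s) (w, t))"
proof -
  let ?M = "m ;; e_chi G (chi_at s)"
  have "(s, t) \<in> R"
    using assms(2) unfolding marking_def by blast
  note box = box_demand_step[OF assms(1) this]
  show ?thesis
  proof (cases "b = e_chi G (chi_at s) ;; d_box G ?M")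
    case True
    then show ?thesis
      using box by blast
  next
    case False
    then obtain x where x: "x \<in> Ran_m ?M \<inter> Vlab G LDia"
      "b = e_chi G (chi_at s) ;; d_dia G x ?M" "t = snd (f (x, s))"
      using assms(2) unfolding marking_def by blast
    have "k = pOm G w \<and> f_step (y, s) (w, t)" if demand: "(y, k, w) \<in> d_dia G x ?M" for y k w
    proof -
      consider "y = x" "k = pOm G w" "w \<in> succs G x" | "(y, k, w) \<in> d_box G ?M"
        using demand unfolding d_dia_def by blast
      then show ?thesis
        using box dia_demand_step[OF assms(1) x(1)] x(3) by cases auto
    qed
    then show ?thesis
      using x(2) by blast
  qed
qed

lemma safe_marking:
  assumes "safe m s" "t \<in> marking m s b"
  shows "safe b t"
  unfolding safe_def
proof
  fix w assume "w \<in> Ran_m b"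
  obtain d where b: "b = e_chi G (chi_at s) ;; d"
    and d: "\<forall>y k w. (y, k, w) \<in> d \<longrightarrow> k = pOm G w \<and> f_step (y, s) (w, t)"
    using marking_demands[OF assms] by blast
  obtain u k where "(u, k, w) \<in> b"
    using \<open>w \<in> Ran_m b\<close> unfolding Ran_m_def by blast
  then obtain y k'' where "(y, k'', w) \<in> d"
    unfolding b mem_mcomp_iff by blast
  then have "f_step (y, s) (w, t)"
    using d by blast
  then show "(w, t) \<in> X \<and> w \<in> pV G"
    unfolding conforming_step_def by simp
qed

lemma marking_segment:
  assumes "safe m s" "t \<in> marking m s b" "(v, k, w) \<in> b" "(v, s) \<in> X"
  shows "\<exists>P. P \<noteq> [] \<and> hd P = v \<and> successively f_step (map (\<lambda>y. (y, s)) P @ [(w, t)]) \<and>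
             k = Max (pOm G ` set (tl P @ [w]))"
proof -
  obtain d where b: "b = e_chi G (chi_at s) ;; d"
    and d: "\<forall>y k w. (y, k, w) \<in> d \<longrightarrow> k = pOm G w \<and> f_step (y, s) (w, t)"
    using marking_demands[OF assms(1,2)] by blast
  obtain k' y k'' where vy: "(v, k', y) \<in> e_chi G (chi_at s)" and "(y, k'', w) \<in> d" "k = max k' k''"
    using assms(3)[unfolded b mem_mcomp_iff] by blast
  then have last_step: "k'' = pOm G w" "f_step (y, s) (w, t)"
    using d by blast+
  show ?thesis
    using vy unfolding e_chi_def
  proof
    assume "(v, k', y) \<in> e_minus G (chi_at s)"
    then obtain \<pi> where \<pi>: "\<pi> \<in> SP G (chi_at s) v" "k' = Om_path G \<pi>" "y = last \<pi>"
      by (auto simp: mem_e_minus_iff)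
    have "2 \<le> length \<pi>" "hd \<pi> = v"
      using SP_paths[OF local_strategy_chi_at \<pi>(1)] by auto
    then have "\<pi> \<noteq> []" "tl \<pi> \<noteq> []"
      by (auto simp flip: length_greater_0_conv)
    have "successively f_step (map (\<lambda>y. (y, s)) \<pi> @ [(w, t)])"
      using SP_conforming[OF assms(4) \<pi>(1)] last_step(2) \<pi>(3) \<open>\<pi> \<noteq> []\<close>
      by (simp add: successively_append_iff last_map)
    moreover have "k = Max (pOm G ` set (tl \<pi> @ [w]))"
      using \<open>k = max k' k''\<close> \<pi>(2) last_step(1) Max_image_snoc[OF \<open>tl \<pi> \<noteq> []\<close>, of "pOm G" w]
      unfolding Om_path_def by simp
    ultimately show ?thesis
      using \<open>\<pi> \<noteq> []\<close> \<open>hd \<pi> = v\<close> by blast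
  next
    assume "(v, k', y) \<in> Delta (pV G)"
    then have "y = v" "k' = 0"
      unfolding mem_Delta_iff by auto
    then show ?thesis
      using last_step \<open>k = max k' k''\<close> by (intro exI[of _ "[v]"]) simp
  qed
qed

lemma marking_in_macrostates:
  assumes "marking m s b \<noteq> {}"
  shows "b \<in> macrostates G"
proof -
  have "b = e_chi G (chi_at s) ;; d_box G (m ;; e_chi G (chi_at s)) \<or>
        (\<exists>x \<in> pV G. b = e_chi G (chi_at s) ;; d_dia G x (m ;; e_chi G (chi_at s)))"
    using assms unfolding marking_def Vlab_def by blast
  then show ?thesis
    using e_chi_mcomp_macrostate[OF local_strategy_chi_at d_box_range]
      e_chi_mcomp_macrostate[OF local_strategy_chi_at d_dia_range] by blast
qed

lemma marking_satisfies_Theta: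
  assumes "safe m s"
  shows "\<exists>B\<in>Theta_G G m (Val s). nabla_sat (R `` {s}) (marking m s) B"
proof -
  let ?M = "m ;; e_chi G (chi_at s)"
  have "locally_compatible G (chi_at s) (Val s) m"
    unfolding locally_compatible_def using compatible_chi_at[OF assms] NBT_chi_at[OF assms] by blast
  then have theta_in_Theta: "theta G m (Val s) (chi_at s) \<subseteq> Theta_G G m (Val s)"
    unfolding Theta_G_def using local_strategy_chi_at by blast
  show ?thesis
  proof (cases "R `` {s} = {} \<and> Ran_m ?M \<inter> Vlab G LDia = {}")
    case True
    then have "{} \<in> theta G m (Val s) (chi_at s)"
      unfolding theta_def by simp
    moreover have "nabla_sat (R `` {s}) (marking m s) {}"
      using True unfolding nabla_sat_def by simp
    ultimately show ?thesis
      using theta_in_Theta by blast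
  next
    case False
    have diamond_succ: "(s, snd (f (x, s))) \<in> R" "snd (f (x, s)) \<in> marking m s (e_chi G (chi_at s) ;; d_dia G x ?M)"
      if "x \<in> Ran_m ?M \<inter> Vlab G LDia" for x
    proof -
      have "(x, s) \<in> X"
        using safe_Ran_mcomp[OF assms] that by blast
      then show "(s, snd (f (x, s))) \<in> R"
        using dia_move that by blast
      then show "snd (f (x, s)) \<in> marking m s (e_chi G (chi_at s) ;; d_dia G x ?M)"
        unfolding marking_def using that by blast
    qed
    have "R `` {s} \<noteq> {}"
      using False diamond_succ(1) by blast
    then have "nabla_sat (R `` {s}) (marking m s) (A_mchi G m (chi_at s))"
      unfolding nabla_sat_def A_mchi_def using diamond_succ(2) by (auto simp: marking_def)
    moreover have "A_mchi G m (chi_at s) \<in> theta G m (Val s) (chi_at s)"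
      unfolding theta_def by simp
    ultimately show ?thesis
      using theta_in_Theta by blast
  qed
qed

lemma marking_legal:
  assumes "safe m s"
  shows "AMark (marking m s) \<in> acc_moves (aut_G G) R Val (ABasic m s)"
proof -
  have "marking m s b \<subseteq> R `` {s}" for b
    unfolding marking_def by auto
  moreover have "marking m s b = {}" if "b \<notin> macrostates G" for b
    using marking_in_macrostates that by blast
  ultimately show ?thesis
    using marking_satisfies_Theta[OF assms] unfolding aut_G_def by auto
qed

lemma NBT_marking_chain:
  assumes safe: "\<And>i. safe (ms i) (ss i)"
    and marked: "\<And>i. ss (Suc i) \<in> marking (ms i) (ss i) (ms (Suc i))"
  shows "NBT ms"
  unfolding NBT_def
proof
  assume "\<exists>vs ks. bad_trace ms vs ks"
  then obtain vs ks where trace: "\<And>i. (vs i, ks i, vs (Suc i)) \<in> ms i" and odd: "odd (max_inf_often ks)"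
    unfolding bad_trace_def max_inf_often_def by blast
  have reach: "(vs (Suc i), ss i) \<in> X" for i
  proof -
    have "vs (Suc i) \<in> Ran_m (ms i)"
      using trace[of i] unfolding mem_Ran_m_iff by blast
    then show ?thesis
      using safe[of i] unfolding safe_def by blast
  qed
  have "\<exists>P. P \<noteq> [] \<and> hd P = vs (Suc i) \<and>
          successively f_step (map (\<lambda>y. (y, ss i)) P @ [(vs (Suc (Suc i)), ss (Suc i))]) \<and>
          ks (Suc i) = Max (pOm G ` set (tl P @ [vs (Suc (Suc i))]))" for i
    using marking_segment[OF safe marked trace reach] .
  then obtain P where P: "\<And>i. P i \<noteq> [] \<and> hd (P i) = vs (Suc i) \<and>
      successively f_step (map (\<lambda>y. (y, ss i)) (P i) @ [(vs (Suc (Suc i)), ss (Suc i))]) \<and>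
      ks (Suc i) = Max (pOm G ` set (tl (P i) @ [vs (Suc (Suc i))]))"
    by metis
  define seg where "seg i = map (\<lambda>y. (y, ss i)) (tl (P i)) @ [(vs (Suc (Suc i)), ss (Suc i))]" for i
  have start: "(if i = 0 then (vs 1, ss 0) else last (seg (i - 1))) = (vs (Suc i), ss i)" for i
    unfolding seg_def by (cases i) auto
  have "(vs (Suc i), ss i) # seg i = map (\<lambda>y. (y, ss i)) (P i) @ [(vs (Suc (Suc i)), ss (Suc i))]" for i
    unfolding seg_def using P[of i] by (cases "P i") auto
  then have chain: "successively f_step ((if i = 0 then (vs 1, ss 0) else last (seg (i - 1))) # seg i)" for i
    unfolding start using P by simp
  have "ks (Suc i) = Max (pOm G ` fst ` set (seg i))" for i
    using P[of i] unfolding seg_def by (simp add: image_image image_Un)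
  then have "even (max_inf_often ks)"
    using trace_parity[OF f_wins _ chain] unfolding seg_def by simp
  with odd show False
    by simp
qed

definition marking_move :: "('v macro, 's) apos \<Rightarrow> ('v macro, 's) apos" where
  "marking_move p = (case p of ABasic m s \<Rightarrow> AMark (marking m s) | AMark U \<Rightarrow> AMark U)"

definition safe_pos :: "('v macro, 's) apos \<Rightarrow> bool" where
  "safe_pos p = (case p of ABasic m s \<Rightarrow> safe m s | AMark U \<Rightarrow> (\<exists>m s. safe m s \<and> U = marking m s))"

lemma safe_pos_step:
  assumes "safe_pos p" "q \<in> acc_moves (aut_G G) R Val p" "acc_owner p \<Longrightarrow> q = marking_move p"
  shows "safe_pos q"
proof (cases p)
  case (ABasic m s)
  then show ?thesis
    using assms unfolding safe_pos_def marking_move_def by auto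
next
  case (AMark U)
  then obtain m s where "safe m s" "U = marking m s"
    using assms(1) unfolding safe_pos_def by auto
  moreover obtain b t where "q = ABasic b t" "t \<in> U b"
    using assms(2) AMark by auto
  ultimately show ?thesis
    unfolding safe_pos_def using safe_marking by auto
qed

lemma safe_init: "safe (Delta {pvI G}) s0"
  unfolding safe_def Ran_m_def Delta_def using init_in_X init_in_pV by auto

abbreviation acc_strategy :: "('v macro, 's) apos list \<Rightarrow> ('v macro, 's) apos" where
  "acc_strategy h \<equiv> marking_move (last h)"

lemma acc_history_safe:
  assumes "h \<noteq> []" "hd h = ABasic (Delta {pvI G}) s0" "path_ok (acc_moves (aut_G G) R Val) h"
    "consistent_fin acc_owner acc_strategy h"
  shows "safe_pos (last h)"
  using assms
proof (induction h rule: rev_induct)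
  case (snoc x h)
  show ?case
  proof (cases "h = []")
    case True
    then show ?thesis
      using snoc safe_init unfolding safe_pos_def by simp
  next
    case False
    then have "path_ok (acc_moves (aut_G G) R Val) h" "x \<in> acc_moves (aut_G G) R Val (last h)"
      "consistent_fin acc_owner acc_strategy h" "acc_owner (last h) \<longrightarrow> x = marking_move (last h)"
      using snoc.prems by (simp_all add: path_ok_snoc consistent_fin_snoc)
    with snoc.IH False snoc.prems(2) show ?thesis
      using safe_pos_step by simp
  qed
qed simp

lemma acc_play_structure:
  assumes "\<pi> 0 = ABasic (Delta {pvI G}) s0" and moves: "\<And>i. \<pi> (Suc i) \<in> acc_moves (aut_G G) R Val (\<pi> i)"
    and "consistent_inf acc_owner acc_strategy \<pi>"
  shows "\<exists>ms ss. (\<forall>i. \<pi> (2 * i) = ABasic (ms i) (ss i) \<and> safe (ms i) (ss i) \<and>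
                     ss (Suc i) \<in> marking (ms i) (ss i) (ms (Suc i)))"
proof -
  have follows: "acc_owner (\<pi> i) \<Longrightarrow> \<pi> (Suc i) = marking_move (\<pi> i)" for i
    using assms(3) unfolding consistent_inf_def by simp
  have shape: "safe_pos (\<pi> n) \<and> (even n \<longleftrightarrow> (\<exists>m s. \<pi> n = ABasic m s))" for n
  proof (induction n)
    case 0
    then show ?case
      using assms(1) safe_init unfolding safe_pos_def by simp
  next
    case (Suc n)
    have "safe_pos (\<pi> (Suc n))"
      using safe_pos_step[OF _ moves follows] Suc by blast
    moreover have "even (Suc n) \<longleftrightarrow> (\<exists>m s. \<pi> (Suc n) = ABasic m s)"
      using Suc follows[of n] moves[of n] by (cases "\<pi> n") (auto simp: marking_move_def)
    ultimately show ?case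
      by blast
  qed
  define ms where "ms i = apos_state (\<pi> (2 * i))" for i
  define ss where "ss i = (case \<pi> (2 * i) of ABasic m s \<Rightarrow> s)" for i
  have basic: "\<pi> (2 * i) = ABasic (ms i) (ss i) \<and> safe (ms i) (ss i)" for i
    using shape[of "2 * i"] unfolding ms_def ss_def safe_pos_def by auto
  moreover have "ss (Suc i) \<in> marking (ms i) (ss i) (ms (Suc i))" for i
  proof -
    have "\<pi> (Suc (2 * i)) = AMark (marking (ms i) (ss i))"
      using follows[of "2 * i"] basic[of i] by (simp add: marking_move_def)
    then show ?thesis
      using moves[of "Suc (2 * i)"] basic[of "Suc i"] by simp
  qed
  ultimately show ?thesis
    by blast
qed

theorem acc_E_wins_init: "acc_E_wins (aut_G G) R Val (ABasic (Delta {pvI G}) s0)"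
proof -
  let ?mv = "acc_moves (aut_G G) R Val" and ?q = "ABasic (Delta {pvI G}) s0"
  have "(acc_owner (last h) \<and> ?mv (last h) \<noteq> {} \<longrightarrow> acc_strategy h \<in> ?mv (last h)) \<and>
        (?mv (last h) = {} \<longrightarrow> \<not> acc_owner (last h))"
    if "h \<noteq> []" "hd h = ?q" "path_ok ?mv h" "consistent_fin acc_owner acc_strategy h" for h
  proof (cases "last h")
    case (ABasic m s)
    then have "safe m s"
      using acc_history_safe[OF that] unfolding safe_pos_def by simp
    then have "marking_move (last h) \<in> ?mv (last h)"
      using marking_legal ABasic unfolding marking_move_def by simp
    then show ?thesis
      by blast
  qed simp
  moreover have "acc_wincond (aut_G G) \<pi>"
    if play: "\<pi> 0 = ?q" "\<forall>i. \<pi> (Suc i) \<in> ?mv (\<pi> i)" "consistent_inf acc_owner acc_strategy \<pi>"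
    for \<pi>
  proof -
    obtain ms ss where "\<forall>i. \<pi> (2 * i) = ABasic (ms i) (ss i) \<and> safe (ms i) (ss i) \<and>
                            ss (Suc i) \<in> marking (ms i) (ss i) (ms (Suc i))"
      using acc_play_structure[OF play(1) spec[OF play(2)] play(3)] by blast
    then have "NBT (\<lambda>i. apos_state (\<pi> (2 * i)))"
      using NBT_marking_chain[of ms ss] by simp
    then show ?thesis
      unfolding acc_wincond_def aut_G_def by simp
  qed
  ultimately have "E_winning_strategy acc_owner ?mv (acc_wincond (aut_G G)) acc_strategy ?q"
    unfolding E_winning_strategy_def by blast
  then show ?thesis
    unfolding acc_E_wins_def E_wins_def by blast
qed

end

section \<open>From the acceptance game back to the evaluation game\<close>

locale A_positional_win = eps_free_parity_formula G for G :: "('v, 'p) pformula" +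
  fixes R :: "'s rel" and Val :: "'s \<Rightarrow> 'p set"
    and g :: "'v \<times> 's \<Rightarrow> 'v \<times> 's" and X :: "('v \<times> 's) set" and s0 :: 's
  assumes g_confining: "confining (eval_owner G Val) (eval_moves G R) False {} X g"
    and g_wins: "\<And>\<pi>. conforming_play (eval_owner G Val) (eval_moves G R) False g X \<pi> \<Longrightarrow>
                      parity_wins pos_pr False \<pi>"
    and init_in_X: "(pvI G, s0) \<in> X"
begin

abbreviation g_step :: "'v \<times> 's \<Rightarrow> 'v \<times> 's \<Rightarrow> bool" where
  "g_step \<equiv> conforming_step R Val False g X"

lemma g_moves:
  assumes "q \<in> X"
  shows "\<not> eval_owner G Val q \<Longrightarrow> g q \<in> eval_moves G R q \<and> g q \<in> X"
    and "eval_owner G Val q \<Longrightarrow> eval_moves G R q \<subseteq> X"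
  using g_confining assms unfolding confining_def by auto

text \<open>The part of an evaluation match that stays at one state s: disjunctions are resolved by
  the local strategy, conjunctions by g.\<close>
definition walk_step :: "('v \<Rightarrow> 'v) \<Rightarrow> 's \<Rightarrow> 'v \<Rightarrow> 'v" where
  "walk_step \<chi> s a =
     (if a \<in> Vlab G LOr then \<chi> a else if a \<in> Vlab G LAnd then fst (g (a, s)) else a)"

lemma walk_step_conforming:
  assumes "local_strategy G \<chi>" "a \<in> Vlab G LOr \<union> Vlab G LAnd" "(a, s) \<in> X"
  shows "chi_step G \<chi> a (walk_step \<chi> s a) \<and> g_step (a, s) (walk_step \<chi> s a, s)"
proof (cases "a \<in> Vlab G LOr")
  case True
  then have or: "pL G a = LOr" "a \<in> pV G"
    by (simp_all add: Vlab_def)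
  have succ: "walk_step \<chi> s a \<in> succs G a"
    using assms(1) True unfolding local_strategy_def walk_step_def by simp
  then have "(walk_step \<chi> s a, s) \<in> eval_moves G R (a, s)"
    using or by (simp add: succs_def)
  moreover from this have "(walk_step \<chi> s a, s) \<in> X"
    using g_moves(2)[OF assms(3)] or by auto
  ultimately show ?thesis
    unfolding chi_step_def conforming_step_def
    using assms(2,3) or succ succs_in_pV[OF succ] True by (simp add: walk_step_def)
next
  case False
  then have and_: "pL G a = LAnd" "a \<in> pV G" "a \<in> Vlab G LAnd"
    using assms(2) by (auto simp: Vlab_def)
  then have "g (a, s) \<in> eval_moves G R (a, s) \<and> g (a, s) \<in> X"
    using g_moves(1)[OF assms(3)] by simp
  then obtain u where u: "g (a, s) = (u, s)" "u \<in> succs G a" "(u, s) \<in> X"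
    using and_(1) by (auto simp: succs_def)
  then have "walk_step \<chi> s a = u"
    using False and_(3) unfolding walk_step_def by simp
  then show ?thesis
    unfolding chi_step_def conforming_step_def
    using assms(2,3) and_ u succs_in_pV[OF u(2)] False by (simp add: succs_def)
qed

definition walk :: "('v \<Rightarrow> 'v) \<Rightarrow> 's \<Rightarrow> 'v \<Rightarrow> nat \<Rightarrow> 'v" where
  "walk \<chi> s v j = (walk_step \<chi> s ^^ j) v"

lemma walk_0 [simp]: "walk \<chi> s v 0 = v"
  and walk_Suc [simp]: "walk \<chi> s v (Suc j) = walk_step \<chi> s (walk \<chi> s v j)"
  unfolding walk_def by simp_all

lemma walk_conforming:
  assumes "local_strategy G \<chi>" "(v, s) \<in> X" "v \<in> pV G"
    and and_or: "\<And>i. i < j \<Longrightarrow> walk \<chi> s v i \<in> Vlab G LOr \<union> Vlab G LAnd"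
  shows "(walk \<chi> s v j, s) \<in> X \<and> walk \<chi> s v j \<in> pV G \<and>
         (j > 0 \<longrightarrow> map (walk \<chi> s v) [0..<Suc j] \<in> SP G \<chi> v) \<and>
         successively g_step (map (\<lambda>i. (walk \<chi> s v i, s)) [0..<Suc j])"
  using and_or
proof (induction j)
  case 0
  then show ?case
    using assms(2,3) by simp
next
  case (Suc j)
  let ?w = "walk \<chi> s v"
  have IH: "(?w j, s) \<in> X" "j > 0 \<longrightarrow> map ?w [0..<Suc j] \<in> SP G \<chi> v"
    "successively g_step (map (\<lambda>i. (?w i, s)) [0..<Suc j])"
    using Suc by auto
  have and_or_j: "?w j \<in> Vlab G LOr \<union> Vlab G LAnd"
    using Suc.prems by simp
  have step: "chi_step G \<chi> (?w j) (?w (Suc j))" "g_step (?w j, s) (?w (Suc j), s)"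
    using walk_step_conforming[OF assms(1) and_or_j IH(1)] by simp_all
  have "map ?w [0..<Suc (Suc j)] \<in> SP G \<chi> v"
  proof (cases "j = 0")
    case True
    then show ?thesis
      using step(1) and_or_j SP.sp_or[of v G \<chi>] SP.sp_and[of v G _ \<chi>]
      unfolding chi_step_def by (auto simp: upt_rec)
  next
    case False
    then have "map ?w [0..<Suc j] \<in> SP G \<chi> v"
      using IH(2) by simp
    then show ?thesis
      using step(1) and_or_j SP.sp_or_step[of "map ?w [0..<Suc j]"] SP.sp_and_step[of "map ?w [0..<Suc j]"]
      unfolding chi_step_def by auto
  qed
  moreover have "successively g_step (map (\<lambda>i. (?w i, s)) [0..<Suc (Suc j)])"
    using IH(3) step(2) by (simp add: successively_append_iff)
  ultimately show ?case
    using step(2) unfolding conforming_step_def by simp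
qed

lemma walk_in_e_chi:
  assumes "local_strategy G \<chi>" "(v, s) \<in> X" "v \<in> pV G"
    and and_or: "\<And>i. i < j \<Longrightarrow> walk \<chi> s v i \<in> Vlab G LOr \<union> Vlab G LAnd"
  shows "(v, if j = 0 then 0 else Max (pOm G ` set (map (walk \<chi> s v) [1..<Suc j])), walk \<chi> s v j)
           \<in> e_chi G \<chi>"
proof (cases "j = 0")
  case True
  then show ?thesis
    using assms(3) unfolding e_chi_def by (simp add: mem_Delta_iff)
next
  case False
  let ?\<pi> = "map (walk \<chi> s v) [0..<Suc j]"
  have "?\<pi> \<in> SP G \<chi> v"
    using walk_conforming[OF assms] False by simp
  moreover have "v \<in> Vlab G LOr \<union> Vlab G LAnd"
    using and_or[of 0] False by simp
  ultimately have "(v, Om_path G ?\<pi>, last ?\<pi>) \<in> e_minus G \<chi>"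
    unfolding mem_e_minus_iff by blast
  moreover have "tl ?\<pi> = map (walk \<chi> s v) [1..<Suc j]"
    by (simp add: upt_rec)
  ultimately show ?thesis
    using False unfolding e_chi_def Om_path_def by simp
qed

lemma infinite_walk_impossible:
  assumes "local_strategy G \<chi>" "locally_compatible G \<chi> (Val s) m" "(u0, k0, v) \<in> m"
    and "(v, s) \<in> X" "v \<in> pV G"
    and and_or: "\<And>j. walk \<chi> s v j \<in> Vlab G LOr \<union> Vlab G LAnd"
  shows False
proof -
  let ?w = "walk \<chi> s v"
  have w_conf: "(?w j, s) \<in> X \<and> ?w j \<in> pV G \<and> successively g_step (map (\<lambda>i. (?w i, s)) [0..<Suc j])"
    for j using walk_conforming[OF assms(1,4,5) and_or] by blast
  have "g_step (?w j, s) (?w (Suc j), s)" for j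
    using successively_nth[OF conjunct2[OF conjunct2[OF w_conf[of "Suc j"]]], of j] by (simp del: upt_Suc)
  then have "conforming_play (eval_owner G Val) (eval_moves G R) False g X (\<lambda>j. (?w j, s))"
    unfolding conforming_step_def conforming_play_def by auto
  then have "parity_wins pos_pr False (\<lambda>j. (?w j, s))"
    by (rule g_wins)
  moreover have "pos_pr (?w j, s) = pOm G (?w j)" for j
    using w_conf[of j] unfolding pos_pr_def by simp
  ultimately have odd_w: "odd (max_inf_often (\<lambda>j. pOm G (?w j)))"
    unfolding parity_wins_def by simp
  define vs where "vs i = (if i = 0 then u0 else ?w (i - 1))" for i
  define ks where "ks i = (if i = 0 then k0 else pOm G (?w i))" for i
  have "(?w j, pOm G (?w (Suc j)), ?w (Suc j)) \<in> e_minus G \<chi>" for j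
  proof -
    have "chi_step G \<chi> (?w j) (?w (Suc j))"
      using walk_step_conforming[OF assms(1) and_or conjunct1[OF w_conf]] by simp
    then have "[?w j, ?w (Suc j)] \<in> SP G \<chi> (?w j)"
      using SP.sp_or[of "?w j" G \<chi>] SP.sp_and[of "?w j" G _ \<chi>] unfolding chi_step_def by auto
    then show ?thesis
      using and_or[of j] unfolding mem_e_minus_iff Om_path_def by force
  qed
  then have trace: "(vs i, ks i, vs (Suc i)) \<in> (if i = 0 then m else e_minus G \<chi>)" for i
    using assms(3) unfolding vs_def ks_def by (cases i) auto
  have w_le: "pOm G (?w j) \<le> max_prio" for j
    using pOm_le_max_prio w_conf by blast
  have "max_inf_often ks = max_inf_often (\<lambda>i. ks (i + 1))"
    using max_inf_often_shift[of ks "max max_prio k0" 1] w_le unfolding ks_def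
    by (simp add: le_max_iff_disj)
  also have "\<dots> = max_inf_often (\<lambda>j. pOm G (?w j))"
    using max_inf_often_shift[of "\<lambda>j. pOm G (?w j)" max_prio 1] w_le unfolding ks_def by simp
  finally have "bad_trace (\<lambda>i. if i = 0 then m else e_minus G \<chi>) vs ks"
    unfolding bad_trace_def using trace odd_w by (simp add: max_inf_often_def)
  then show False
    using assms(2) unfolding locally_compatible_def NBT_def by blast
qed

lemma walk_exits:
  assumes "local_strategy G \<chi>" "locally_compatible G \<chi> (Val s) m" "(u0, k0, v) \<in> m"
    and "(v, s) \<in> X" "v \<in> pV G"
  shows "\<exists>j. walk \<chi> s v j \<notin> Vlab G LOr \<union> Vlab G LAnd \<and>
             (\<forall>i<j. walk \<chi> s v i \<in> Vlab G LOr \<union> Vlab G LAnd)"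
proof -
  let ?exit = "\<lambda>j. walk \<chi> s v j \<notin> Vlab G LOr \<union> Vlab G LAnd"
  have "\<exists>j. ?exit j"
    using infinite_walk_impossible[OF assms] by blast
  define j where "j = (LEAST j. ?exit j)"
  have "?exit j"
    unfolding j_def by (rule LeastI_ex) fact
  moreover have "\<not> ?exit i" if "i < j" for i
    using not_less_Least[OF that[unfolded j_def]] .
  ultimately show ?thesis
    by blast
qed

lemma acc_move_to_basic:
  assumes "t \<in> U b" "b \<in> macrostates G"
  shows "ABasic b t \<in> acc_moves (aut_G G) R Val (AMark U)"
  using assms unfolding aut_G_def by simp

context
  fixes m s \<chi> B U
  assumes B: "B \<in> theta G m (Val s) \<chi>" and U: "nabla_sat (R `` {s}) U B"
    and U_macro: "\<And>b. b \<notin> macrostates G \<Longrightarrow> U b = {}"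
begin

lemma dia_response:
  assumes y: "y \<in> Ran_m (m ;; e_chi G \<chi>)" "(y, s) \<in> X" "y \<in> pV G" "pL G y = LDia"
    and vy: "(v, k', y) \<in> e_chi G \<chi>"
  shows "\<exists>b t w. ABasic b t \<in> acc_moves (aut_G G) R Val (AMark U) \<and>
                (v, max k' (pOm G w), w) \<in> b \<and> g_step (y, s) (w, t)"
proof -
  let ?M = "m ;; e_chi G \<chi>"
  let ?b = "e_chi G \<chi> ;; d_dia G y ?M"
  have "y \<in> Ran_m ?M \<inter> Vlab G LDia"
    using y by (simp add: Vlab_def)
  then have "B = A_mchi G m \<chi>" "?b \<in> A_mchi G m \<chi>"
    using B unfolding theta_def A_mchi_def by (auto split: if_splits)
  then obtain t where t: "(s, t) \<in> R" "t \<in> U ?b"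
    using U unfolding nabla_sat_def by blast
  obtain w where w: "w \<in> succs G y"
    using modal_succ_exists[OF y(3)] y(4) by auto
  have "(y, pOm G w, w) \<in> d_dia G y ?M"
    unfolding d_dia_def using w by blast
  then have "(v, max k' (pOm G w), w) \<in> ?b"
    using vy unfolding mem_mcomp_iff by blast
  moreover have "ABasic ?b t \<in> acc_moves (aut_G G) R Val (AMark U)"
    using t(2) U_macro by (intro acc_move_to_basic) blast+
  moreover have "(w, t) \<in> eval_moves G R (y, s)" "eval_owner G Val (y, s)"
    using y(4) w t(1) by (simp_all add: succs_def)
  then have "g_step (y, s) (w, t)"
    unfolding conforming_step_def using g_moves(2)[OF y(2)] y(2,3) succs_in_pV[OF w] by auto
  ultimately show ?thesis
    by blast
qed

lemma box_response:
  assumes y: "y \<in> Ran_m (m ;; e_chi G \<chi>)" "(y, s) \<in> X" "y \<in> pV G" "pL G y = LBox"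
    and vy: "(v, k', y) \<in> e_chi G \<chi>"
  shows "\<exists>b t w. ABasic b t \<in> acc_moves (aut_G G) R Val (AMark U) \<and>
                (v, max k' (pOm G w), w) \<in> b \<and> g_step (y, s) (w, t)"
proof -
  let ?M = "m ;; e_chi G \<chi>"
  have "\<not> eval_owner G Val (y, s)"
    using y(4) by simp
  then have g_move: "g (y, s) \<in> eval_moves G R (y, s) \<and> g (y, s) \<in> X"
    using g_moves(1)[OF y(2)] by blast
  then obtain w t where wt: "g (y, s) = (w, t)" "w \<in> succs G y" "(s, t) \<in> R"
    using y(4) by (auto simp: succs_def)
  then obtain b where b: "b \<in> B" "t \<in> U b"
    using U unfolding nabla_sat_def by blast
  then have "B = A_mchi G m \<chi>"
    using B unfolding theta_def by (auto split: if_splits)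
  then have "b = e_chi G \<chi> ;; d_box G ?M \<or> (\<exists>x. b = e_chi G \<chi> ;; d_dia G x ?M)"
    using b(1) unfolding A_mchi_def by blast
  moreover have "(y, pOm G w, w) \<in> d_box G ?M"
    unfolding d_box_def using y(1,3,4) wt(2) by (auto simp: Vlab_def)
  moreover have "(v, max k' (pOm G w), w) \<in> e_chi G \<chi> ;; d" if "(y, pOm G w, w) \<in> d" for d
    using vy that unfolding mem_mcomp_iff by blast
  ultimately have "(v, max k' (pOm G w), w) \<in> b"
    unfolding d_dia_def by blast
  moreover have "ABasic b t \<in> acc_moves (aut_G G) R Val (AMark U)"
    using b(2) U_macro by (intro acc_move_to_basic) blast+
  moreover have "g_step (y, s) (w, t)"
    unfolding conforming_step_def using g_move wt y(2,3) succs_in_pV[OF wt(2)] by auto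
  ultimately show ?thesis
    by blast
qed

lemma exit_response:
  assumes compat: "compatible G (Ran_m (m ;; e_chi G \<chi>)) (Val s)"
    and y: "y \<in> Ran_m (m ;; e_chi G \<chi>)" "(y, s) \<in> X" "y \<in> pV G" "y \<notin> Vlab G LOr \<union> Vlab G LAnd"
    and vy: "(v, k', y) \<in> e_chi G \<chi>"
  shows "\<exists>b t w. ABasic b t \<in> acc_moves (aut_G G) R Val (AMark U) \<and>
                (v, max k' (pOm G w), w) \<in> b \<and> g_step (y, s) (w, t)"
proof (cases "pL G y")
  case LDia
  then show ?thesis
    using dia_response[OF y(1-3) _ vy] by blast
next
  case LBox
  then show ?thesis
    using box_response[OF y(1-3) _ vy] by blast
next
  case LTop
  then show ?thesis
    using g_moves(1)[OF y(2)] by simp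
next
  case LBot
  then show ?thesis
    using compat y(1) unfolding compatible_def by blast
next
  case (LLit p)
  then have "p \<in> Val s"
    using compat y(1) unfolding compatible_def by blast
  then show ?thesis
    using g_moves(1)[OF y(2)] LLit by simp
next
  case (LNLit p)
  then have "p \<notin> Val s"
    using compat y(1) unfolding compatible_def by blast
  then show ?thesis
    using g_moves(1)[OF y(2)] LNLit by simp
qed (use y(3,4) no_eps in \<open>auto simp: Vlab_def\<close>)

end

lemma A_response:
  assumes v: "(v, s) \<in> X" "v \<in> pV G" "v \<in> Ran_m m"
    and U: "AMark U \<in> acc_moves (aut_G G) R Val (ABasic m s)"
  shows "\<exists>b t w k seg. ABasic b t \<in> acc_moves (aut_G G) R Val (AMark U) \<and> (v, k, w) \<in> b \<and>
           seg \<noteq> [] \<and> successively g_step ((v, s) # seg) \<and> last seg = (w, t) \<and>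
           k = Max (pOm G ` fst ` set seg)"
proof -
  obtain B \<chi> where U_macro: "\<And>b. b \<notin> macrostates G \<Longrightarrow> U b = {}"
    and B: "B \<in> theta G m (Val s) \<chi>" "local_strategy G \<chi>" "locally_compatible G \<chi> (Val s) m"
    and nabla: "nabla_sat (R `` {s}) U B"
    using U unfolding Theta_G_def aut_G_def by auto
  obtain u0 k0 where "(u0, k0, v) \<in> m"
    using v(3) unfolding mem_Ran_m_iff by blast
  let ?w = "walk \<chi> s v"
  obtain j where y: "?w j \<notin> Vlab G LOr \<union> Vlab G LAnd"
    and before: "\<And>i. i < j \<Longrightarrow> ?w i \<in> Vlab G LOr \<union> Vlab G LAnd"
    using walk_exits[OF B(2,3) \<open>(u0, k0, v) \<in> m\<close> v(1,2)] by (elim exE conjE) simp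
  have W: "(?w j, s) \<in> X" "?w j \<in> pV G" "successively g_step (map (\<lambda>i. (?w i, s)) [0..<Suc j])"
    using walk_conforming[OF B(2) v(1,2) before] by auto
  define k' where "k' = (if j = 0 then 0 else Max (pOm G ` set (map ?w [1..<Suc j])))"
  have vy: "(v, k', ?w j) \<in> e_chi G \<chi>"
    unfolding k'_def using walk_in_e_chi[OF B(2) v(1,2) before] .
  have y_Ran: "?w j \<in> Ran_m (m ;; e_chi G \<chi>)"
    using \<open>(u0, k0, v) \<in> m\<close> vy unfolding mem_Ran_m_iff mem_mcomp_iff by blast
  have compat: "compatible G (Ran_m (m ;; e_chi G \<chi>)) (Val s)"
    using B(3) unfolding locally_compatible_def by blast
  have "\<exists>b t w. ABasic b t \<in> acc_moves (aut_G G) R Val (AMark U) \<and>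
                (v, max k' (pOm G w), w) \<in> b \<and> g_step (?w j, s) (w, t)"
    using exit_response[OF B(1) nabla U_macro compat y_Ran W(1,2) y vy] .
  then obtain b t w where bt: "ABasic b t \<in> acc_moves (aut_G G) R Val (AMark U)"
    "(v, max k' (pOm G w), w) \<in> b" "g_step (?w j, s) (w, t)"
    by blast
  define seg where "seg = map (\<lambda>i. (?w i, s)) [1..<Suc j] @ [(w, t)]"
  have "(v, s) # seg = map (\<lambda>i. (?w i, s)) [0..<Suc j] @ [(w, t)]"
    unfolding seg_def by (simp add: upt_rec)
  then have "successively g_step ((v, s) # seg)"
    using W(3) bt(3) by (simp add: successively_append_iff)
  moreover have "max k' (pOm G w) = Max (pOm G ` fst ` set seg)"
  proof (cases "j = 0")
    case True
    then show ?thesis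
      unfolding seg_def k'_def by simp
  next
    case False
    have "fst ` set seg = set (map ?w [1..<Suc j] @ [w])"
      unfolding seg_def by force
    then show ?thesis
      using Max_image_snoc[of "map ?w [1..<Suc j]" "pOm G" w] False unfolding k'_def by simp
  qed
  moreover have "seg \<noteq> []" "last seg = (w, t)"
    unfolding seg_def by simp_all
  ultimately show ?thesis
    using bt(1,2) by blast
qed

end

locale A_refutes = A_positional_win G R Val g X s0
  for G :: "('v, 'p) pformula" and R Val g X and s0 :: 's +
  fixes \<sigma> :: "('v macro, 's) apos list \<Rightarrow> ('v macro, 's) apos"
  assumes \<sigma>_wins: "E_winning_strategy acc_owner (acc_moves (aut_G G) R Val) (acc_wincond (aut_G G)) \<sigma>
                     (ABasic (Delta {pvI G}) s0)"
begin

text \<open>A history consistent with \<sigma> that ends at a basic position whose macrostate contains a trace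
  ending in v, where the evaluation match following g has reached v at the current state.\<close>
definition tracked :: "('v macro, 's) apos list \<Rightarrow> 'v \<Rightarrow> bool" where
  "tracked h v \<longleftrightarrow> h \<noteq> [] \<and> hd h = ABasic (Delta {pvI G}) s0 \<and>
     path_ok (acc_moves (aut_G G) R Val) h \<and> consistent_fin acc_owner \<sigma> h \<and>
     (\<exists>m s. last h = ABasic m s \<and> v \<in> Ran_m m \<and> (v, s) \<in> X \<and> v \<in> pV G)"

lemma tracked_init: "tracked [ABasic (Delta {pvI G}) s0] (pvI G)"
  unfolding tracked_def path_ok_def consistent_fin_def Ran_m_def Delta_def
  using init_in_X init_in_pV by auto

lemma tracked_extend:
  assumes "tracked h v"
  shows "\<exists>m s b t w k seg. last h = ABasic m s \<and> tracked (h @ [\<sigma> h, ABasic b t]) w \<and>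
           (v, k, w) \<in> b \<and> seg \<noteq> [] \<and> successively g_step ((v, s) # seg) \<and> last seg = (w, t) \<and>
           k = Max (pOm G ` fst ` set seg)"
proof -
  let ?mv = "acc_moves (aut_G G) R Val"
  obtain m s where h: "h \<noteq> []" "hd h = ABasic (Delta {pvI G}) s0" "path_ok ?mv h"
    "consistent_fin acc_owner \<sigma> h" "last h = ABasic m s" "v \<in> Ran_m m" "(v, s) \<in> X" "v \<in> pV G"
    using assms unfolding tracked_def by blast
  have "(acc_owner (last h) \<and> ?mv (last h) \<noteq> {} \<longrightarrow> \<sigma> h \<in> ?mv (last h)) \<and>
        (?mv (last h) = {} \<longrightarrow> \<not> acc_owner (last h))"
    using \<sigma>_wins h(1-4) unfolding E_winning_strategy_def by blast
  then have "\<sigma> h \<in> ?mv (ABasic m s)"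
    unfolding h(5) acc_owner.simps by blast
  then obtain U where U: "\<sigma> h = AMark U" "AMark U \<in> ?mv (ABasic m s)"
    by (cases "\<sigma> h") auto
  obtain b t w k seg where step: "ABasic b t \<in> ?mv (AMark U)" "(v, k, w) \<in> b" "seg \<noteq> []"
    "successively g_step ((v, s) # seg)" "last seg = (w, t)" "k = Max (pOm G ` fst ` set seg)"
    using A_response[OF h(7,8,6) U(2)] by blast
  have "(w, t) \<in> set seg"
    using step(3,5) last_in_set by metis
  then have "(w, t) \<in> X" "w \<in> pV G"
    using conforming_steps_in_pV[OF step(4)]
      successively_tl_property[OF step(4), of "(w, t)" "\<lambda>q. q \<in> X"]
    unfolding conforming_step_def by auto
  moreover have "w \<in> Ran_m b"
    using step(2) unfolding mem_Ran_m_iff by blast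
  moreover have "path_ok ?mv (h @ [\<sigma> h, ABasic b t])"
    using h(1,3,5) U step(1) path_ok_snoc[of ?mv "h @ [\<sigma> h]"] by (simp add: path_ok_snoc)
  moreover have "consistent_fin acc_owner \<sigma> (h @ [\<sigma> h, ABasic b t])"
    using h(4) U consistent_fin_snoc[of acc_owner \<sigma> "h @ [\<sigma> h]"] by (simp add: consistent_fin_snoc)
  ultimately have "tracked (h @ [\<sigma> h, ABasic b t]) w"
    unfolding tracked_def using h(1,2) by auto
  then show ?thesis
    using h(5) step(2-6) by blast
qed

text \<open>One round of the acceptance match, from h to h', is shadowed by the finite evaluation
  match seg from v to v', whose largest priority k labels the trace step from v to v'.\<close>
definition linked :: "('v macro, 's) apos list \<Rightarrow> 'v \<Rightarrow> ('v macro, 's) apos list \<Rightarrow> 'v \<Rightarrow>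
                      ('v \<times> 's) list \<Rightarrow> nat \<Rightarrow> bool" where
  "linked h v h' v' seg k \<longleftrightarrow>
     (\<exists>m s b t. last h = ABasic m s \<and> h' = h @ [\<sigma> h, ABasic b t] \<and> (v, k, v') \<in> b \<and>
        seg \<noteq> [] \<and> successively g_step ((v, s) # seg) \<and> last seg = (v', t) \<and>
        k = Max (pOm G ` fst ` set seg))"

lemma counter_match:
  "\<exists>H V seg K. H 0 = [ABasic (Delta {pvI G}) s0] \<and> V 0 = pvI G \<and>
     (\<forall>n. tracked (H n) (V n) \<and> linked (H n) (V n) (H (Suc n)) (V (Suc n)) (seg n) (K n))"
proof -
  define P where "P x y \<longleftrightarrow> tracked (fst y) (snd y) \<and> (\<exists>seg k. linked (fst x) (snd x) (fst y) (snd y) seg k)"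
    for x y :: "('v macro, 's) apos list \<times> 'v"
  have ex: "\<exists>y. P x y" if "tracked (fst x) (snd x)" for x
    using tracked_extend[OF that] unfolding P_def linked_def by fastforce
  define S where "S n = ((\<lambda>x. SOME y. P x y) ^^ n) ([ABasic (Delta {pvI G}) s0], pvI G)" for n
  have S_Suc: "S (Suc n) = (SOME y. P (S n) y)" for n
    unfolding S_def by simp
  have tracked_S: "tracked (fst (S n)) (snd (S n))" for n
  proof (induction n)
    case 0
    then show ?case
      using tracked_init unfolding S_def by simp
  next
    case (Suc n)
    then show ?case
      using someI_ex[OF ex[OF Suc]] unfolding S_Suc P_def by blast
  qed
  have "\<exists>seg k. linked (fst (S n)) (snd (S n)) (fst (S (Suc n))) (snd (S (Suc n))) seg k" for n
    using someI_ex[OF ex[OF tracked_S[of n]]] unfolding S_Suc P_def by blast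
  then obtain seg K where "\<And>n. linked (fst (S n)) (snd (S n)) (fst (S (Suc n))) (snd (S (Suc n))) (seg n) (K n)"
    by metis
  then show ?thesis
    using tracked_S by (intro exI[of _ "\<lambda>n. fst (S n)"] exI[of _ "\<lambda>n. snd (S n)"]) (auto simp: S_def)
qed

lemma NBT_counter_match:
  assumes H0: "H 0 = [ABasic (Delta {pvI G}) s0]" and tracked: "\<And>n. tracked (H n) (V n)"
    and H_Suc: "\<And>n. \<exists>x y. H (Suc n) = H n @ [x, y]"
  shows "NBT (\<lambda>n. apos_state (last (H n)))"
proof -
  let ?mv = "acc_moves (aut_G G) R Val"
  have len: "length (H n) = Suc (2 * n)" for n
  proof (induction n)
    case (Suc n)
    then show ?case
      using H_Suc[of n] by auto
  qed (simp add: H0)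
  have ext: "\<exists>xs. H (Suc n) = H n @ xs" for n
    using H_Suc by blast
  have valid: "path_ok ?mv (H n)" "consistent_fin acc_owner \<sigma> (H n)" for n
    using tracked[of n] unfolding tracked_def by auto
  define \<pi> where "\<pi> i = H i ! i" for i
  have "\<pi> 0 = ABasic (Delta {pvI G}) s0" "\<forall>i. \<pi> (Suc i) \<in> ?mv (\<pi> i)" "consistent_inf acc_owner \<sigma> \<pi>"
    using play_of_history_chain[of H ?mv acc_owner \<sigma>, OF ext _ valid] len H0 unfolding \<pi>_def by auto
  then have "acc_wincond (aut_G G) \<pi>"
    using \<sigma>_wins unfolding E_winning_strategy_def by blast
  moreover have "\<pi> (2 * n) = last (H n)" for n
    using nth_history_chain[where H=H, OF ext, of "2 * n" n] len unfolding \<pi>_def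
    by (simp add: last_conv_nth flip: length_greater_0_conv)
  ultimately show ?thesis
    unfolding acc_wincond_def aut_G_def by simp
qed

theorem counter_match_contradiction: False
proof -
  obtain H V seg K where H0: "H 0 = [ABasic (Delta {pvI G}) s0]" and V0: "V 0 = pvI G"
    and tracked: "\<And>n. tracked (H n) (V n)"
    and linked: "\<And>n. linked (H n) (V n) (H (Suc n)) (V (Suc n)) (seg n) (K n)"
    using counter_match by blast
  define ms where "ms n = apos_state (last (H n))" for n
  define ss where "ss n = (case last (H n) of ABasic m s \<Rightarrow> s)" for n
  have round: "H (Suc n) = H n @ [\<sigma> (H n), ABasic (ms (Suc n)) (ss (Suc n))] \<and>
      (V n, K n, V (Suc n)) \<in> ms (Suc n) \<and> seg n \<noteq> [] \<and> successively g_step ((V n, ss n) # seg n) \<and>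
      last (seg n) = (V (Suc n), ss (Suc n)) \<and> K n = Max (pOm G ` fst ` set (seg n))" for n
    using linked[of n] unfolding linked_def ms_def ss_def by auto
  have "NBT ms"
    using NBT_counter_match[where H=H and V=V, OF H0 tracked] round unfolding ms_def by blast
  define vs where "vs i = (if i = 0 then pvI G else V (i - 1))" for i
  define ks where "ks i = (if i = 0 then 0 else K (i - 1))" for i
  have "(vs i, ks i, vs (Suc i)) \<in> ms i" for i
    using round[of "i - 1"] H0 V0 unfolding vs_def ks_def ms_def
    by (cases i) (auto simp: Delta_def)
  moreover have "even (max_inf_often ks) = False"
  proof (rule trace_parity[OF g_wins])
    show "seg i \<noteq> []" for i
      using round by blast
    have "(if i = 0 then (pvI G, s0) else last (seg (i - 1))) = (V i, ss i)" for i
      using round[of "i - 1"] H0 V0 unfolding ss_def by (cases i) auto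
    then show "successively g_step ((if i = 0 then (pvI G, s0) else last (seg (i - 1))) # seg i)" for i
      using round by simp
    show "ks (Suc i) = Max (pOm G ` fst ` set (seg i))" for i
      using round unfolding ks_def by simp
  qed
  ultimately have "bad_trace ms vs ks"
    unfolding bad_trace_def max_inf_often_def by simp
  with \<open>NBT ms\<close> show False
    unfolding NBT_def by blast
qed

end

lemma (in A_positional_win) not_acc_E_wins_init: "\<not> acc_E_wins (aut_G G) R Val (ABasic (Delta {pvI G}) s0)"
proof
  assume "acc_E_wins (aut_G G) R Val (ABasic (Delta {pvI G}) s0)"
  then obtain \<sigma> where "E_winning_strategy acc_owner (acc_moves (aut_G G) R Val) (acc_wincond (aut_G G)) \<sigma>
                         (ABasic (Delta {pvI G}) s0)"
    unfolding acc_E_wins_def E_wins_def by blast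
  then interpret A_refutes G R Val g X s0 \<sigma>
    by unfold_locales
  show False
    by (rule counter_match_contradiction)
qed

context eps_free_parity_formula
begin

lemma eval_wincond_iff_parity_wins:
  assumes "\<pi> 0 = (pvI G, s)" "\<forall>i. \<pi> (Suc i) \<in> eval_moves G R (\<pi> i)"
  shows "eval_wincond G \<pi> \<longleftrightarrow> parity_wins pos_pr True \<pi>"
proof -
  have "fst (\<pi> i) \<in> pV G" for i
  proof (induction i)
    case (Suc i)
    then show ?case
      using eval_moves_in_pV assms(2)[rule_format, of i] by blast
  qed (simp add: assms(1) init_in_pV)
  then show ?thesis
    unfolding eval_wincond_def parity_wins_def max_inf_often_def pos_pr_def by simp
qed

lemma positional_E_win_iff:
  assumes "positional_win (eval_owner G Val) (eval_moves G R) pos_pr True f (pvI G, s)"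
  shows "eval_E_wins G R Val (pvI G, s)"
    and "acc_E_wins (aut_G G) R Val (ABasic (Delta {pvI G}) s)"
proof -
  show "eval_E_wins G R Val (pvI G, s)"
    unfolding eval_E_wins_def
  proof (rule positional_win_imp_E_wins[OF assms])
    fix \<pi> assume "\<pi> 0 = (pvI G, s)" "\<forall>i. \<pi> (Suc i) \<in> eval_moves G R (\<pi> i)" "parity_wins pos_pr True \<pi>"
    then show "eval_wincond G \<pi>"
      by (simp add: eval_wincond_iff_parity_wins)
  qed
  obtain X where "(pvI G, s) \<in> X" "confining (eval_owner G Val) (eval_moves G R) True {} X f"
    "\<forall>\<pi>. conforming_play (eval_owner G Val) (eval_moves G R) True f X \<pi> \<longrightarrow> parity_wins pos_pr True \<pi>"
    using assms unfolding positional_win_def by blast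
  then interpret E_positional_win G R Val f X s
    by unfold_locales auto
  show "acc_E_wins (aut_G G) R Val (ABasic (Delta {pvI G}) s)"
    by (rule acc_E_wins_init)
qed

lemma positional_A_win_iff:
  assumes "positional_win (eval_owner G Val) (eval_moves G R) pos_pr False g (pvI G, s)"
  shows "\<not> eval_E_wins G R Val (pvI G, s)"
    and "\<not> acc_E_wins (aut_G G) R Val (ABasic (Delta {pvI G}) s)"
proof -
  show "\<not> eval_E_wins G R Val (pvI G, s)"
  proof
    assume "eval_E_wins G R Val (pvI G, s)"
    then show False
      unfolding eval_E_wins_def
    proof (rule E_wins_excludes_positional_A_win[OF _ assms])
      fix \<pi> assume "\<pi> 0 = (pvI G, s)" "\<forall>i. \<pi> (Suc i) \<in> eval_moves G R (\<pi> i)" "eval_wincond G \<pi>"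
      then show "parity_wins pos_pr True \<pi>"
        by (simp add: eval_wincond_iff_parity_wins)
    qed
  qed
  obtain X where "(pvI G, s) \<in> X" "confining (eval_owner G Val) (eval_moves G R) False {} X g"
    "\<forall>\<pi>. conforming_play (eval_owner G Val) (eval_moves G R) False g X \<pi> \<longrightarrow> parity_wins pos_pr False \<pi>"
    using assms unfolding positional_win_def by blast
  then interpret A_positional_win G R Val g X s
    by unfold_locales auto
  show "\<not> acc_E_wins (aut_G G) R Val (ABasic (Delta {pvI G}) s)"
    by (rule not_acc_E_wins_init)
qed

theorem eval_game_iff_acceptance_game:
  "eval_E_wins G R Val (pvI G, s) \<longleftrightarrow> acc_E_wins (aut_G G) R Val (ABasic (aInit (aut_G G)) s)"
proof -
  have init: "aInit (aut_G G) = Delta {pvI G}"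
    unfolding aut_G_def by simp
  have "(\<exists>f. positional_win (eval_owner G Val) (eval_moves G R) pos_pr True f (pvI G, s)) \<or>
        (\<exists>g. positional_win (eval_owner G Val) (eval_moves G R) pos_pr False g (pvI G, s))"
    using pos_pr_le by (rule positional_determinacy)
  then show ?thesis
  proof (elim disjE exE)
    fix f assume win: "positional_win (eval_owner G Val) (eval_moves G R) pos_pr True f (pvI G, s)"
    show ?thesis
      using positional_E_win_iff[OF win] init by simp
  next
    fix g assume win: "positional_win (eval_owner G Val) (eval_moves G R) pos_pr False g (pvI G, s)"
    show ?thesis
      using positional_A_win_iff[OF win] init by simp
  qed
qed

end

theorem proposition3:
  fixes G :: "('v, 'p :: finite) pformula"
  assumes "parity_formula G"
    and "\<forall>v \<in> pV G. pL G v \<noteq> LEps"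
    and "\<forall>v \<in> pV G. pL G v \<in> {LAnd, LOr} \<longrightarrow> succs G v \<noteq> {}"
  shows "\<forall>(R :: 's rel) (Val :: 's \<Rightarrow> 'p set) (s :: 's).
           eval_E_wins G R Val (pvI G, s) \<longleftrightarrow>
           acc_E_wins (aut_G G) R Val (ABasic (aInit (aut_G G)) s)"
proof (intro allI)
  fix R :: "'s rel" and Val :: "'s \<Rightarrow> 'p set" and s :: 's
  interpret eps_free_parity_formula G
    using assms by unfold_locales
  show "eval_E_wins G R Val (pvI G, s) \<longleftrightarrow> acc_E_wins (aut_G G) R Val (ABasic (aInit (aut_G G)) s)"
    by (rule eval_game_iff_acceptance_game)
qed

end
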